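(* For any $p, c \in \mathbb{N}^+$, there exists a decoder-only Transformer model $M: \mathcal{V}^* \to \mathcal{V}$ that autoregressively decides $\operatorname{3-SAT}_{p,c}$ in no more than $p \cdot 2^{p+1}$ Chain-of-Thought iterations. The model $M$ has $L = 7$ layers, $H = 5$ attention heads, embedding dimension $d_{\text{emb}} = O(p)$, and $O(p^2)$ parameters.
   Context: Decoder-only Transformer: given tokens $s_1,\dots,s_n$ from a finite vocabulary $\mathcal{V}$, form $X^{(0)} = (\operatorname{Emb}(s_1)+p_1,\dots,\operatorname{Emb}(s_n)+p_n)\in\mathbb{R}^{n\times d}$ with a fixed token embedding and positional encoding vectors $p_i$. For $l=1,\dots,L$: $H^{(l)} = X^{(l-1)} + \operatorname{MHA}(X^{(l-1)})$ and $X^{(l)} = H^{(l)} + \operatorname{MLP}(H^{(l)})$, where $\operatorname{MHA}(X) = [\operatorname{Att}_1(X);\dots;\operatorname{Att}_H(X)]W_O$, $\operatorname{Att}_h(X) = \operatorname{softmax}\big(XW_Q^{h}(XW_K^{h})^\top/\sqrt{d_h} + \mathbf{M}\big)XW_V^{h}$ with a causal mask $\mathbf{M}$ (each position attends only to itself and earlier positions), and $\operatorname{MLP}(H) = \operatorname{ReGLU}(HW_1+b_1)W_2+b_2$ where $\operatorname{ReGLU}(u_1,u_2) = u_1\otimes\operatorname{ReLU}(u_2)$ (elementwise product of the two halves). The output token is $s_{n+1} = \arg\max_v (X^{(L)}W_{\text{out}}+b_{\text{out}})_{n,v}$ (greedy decoding). The parameter count excludes the positional encodings; the positional encoding at position $i$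 is the numerical value $i$ in one designated coordinate. Greedy autoregressive generation: starting from the prompt $s_{1:n}$, repeatedly append $s_t = M(s_{1:t-1})$ until a token in a stop set $\mathcal{E}\subseteq\mathcal{V}$ is produced; the generated tokens are the Chain-of-Thought (CoT), and each generated token is one CoT iteration. A decision problem is a map $f: L\to\{0,1\}$ on a set $L$ of strings over an alphabet $\Sigma\subseteq\mathcal{V}$. For $\mathcal{E}=\{\mathcal{E}_0,\mathcal{E}_1\}\subset\mathcal{V}$, the procedure $\mathcal{A}_{M,\mathcal{E}}$ runs greedy generation with stop tokens $\mathcal{E}$ and outputs $0$ if the generated sequence ends with $\mathcal{E}_0$ and $1$ otherwise. $M$ autoregressively decides $f$ if there is some $\mathcal{E}$ such that on every input $x\in L$, $\mathcal{A}_{M,\mathcal{E}}$ halts and outputs $f(x)$. $\operatorname{DIMACS}(p,c)$: the set of DIMACS encodings of 3-SAT formulas (CNF formulas with at most 3 literals per clause) with at most $p$ variables $x_1,\dots,x_p$ and at most $c$ clauses, where literal $x_i$ is the token $i$, literal $\lnot x_i$ is the token $-i$, each clause is written as its literal tokens followed by the token $0$, with a token [BOS] prepended and a token [SEP] appended. $\operatorname{3-SAT}_{p,c}: \operatorname{DIMACS}(p,c)\to\{0,1\}$ maps an encoding to $1$ iff the encoded formula is satisfiable. *)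

theory Defs
  imports Complex_Main
begin

text \<open>Lit i is the integer token i (literal x_i for i > 0, literal
  not x_i for i < 0, clause terminator for i = 0). Aux n are further tokens a model
  may put into its (finite) vocabulary.\<close>
datatype tok = Lit int | BOS | SEP | Aux nat

text \<open>Vectors are functions nat => real, matrices nat => nat => real (row, column);
  only the entries inside the declared dimensions are ever used.\<close>

record layer =
  dhead :: nat
  dmlp :: nat                               \<comment> \<open>MLP width m (W1 has 2m columns)\<close>
  WQ :: "nat \<Rightarrow> nat \<Rightarrow> nat \<Rightarrow> real"      \<comment> \<open>head h, d x d_h\<close>
  WK :: "nat \<Rightarrow> nat \<Rightarrow> nat \<Rightarrow> real"
  WV :: "nat \<Rightarrow> nat \<Rightarrow> nat \<Rightarrow> real"
  WO :: "nat \<Rightarrow> nat \<Rightarrow> real"             \<comment> \<open>(H d_h) x d\<close>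
  W1 :: "nat \<Rightarrow> nat \<Rightarrow> real"             \<comment> \<open>d x 2m\<close>
  b1 :: "nat \<Rightarrow> real"
  W2 :: "nat \<Rightarrow> nat \<Rightarrow> real"             \<comment> \<open>m x d\<close>
  b2 :: "nat \<Rightarrow> real"

record transformer =
  vocab :: "tok list"
  dim :: nat
  nheads :: nat
  layers :: "layer list"
  emb :: "tok \<Rightarrow> nat \<Rightarrow> real"
  pos_coord :: nat
  Wout :: "nat \<Rightarrow> nat \<Rightarrow> real"           \<comment> \<open>d x |V|, column j belongs to vocab ! j\<close>
  bout :: "nat \<Rightarrow> real"

definition wf_transformer :: "transformer \<Rightarrow> bool" where
  "wf_transformer M \<longleftrightarrow> vocab M \<noteq> [] \<and> distinct (vocab M) \<and> pos_coord M < dim M"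

text \<open>Number of parameters (positional encodings excluded): all entries of the token
  embedding, of all attention / MLP weights and biases, and of the output layer.\<close>
definition layer_params :: "nat \<Rightarrow> nat \<Rightarrow> layer \<Rightarrow> nat" where
  "layer_params d H l =
     3 * H * d * dhead l + H * dhead l * d
     + d * (2 * dmlp l) + 2 * dmlp l + dmlp l * d + d"

definition num_params :: "transformer \<Rightarrow> nat" where
  "num_params M =
     length (vocab M) * dim M
     + (\<Sum>l\<leftarrow>layers M. layer_params (dim M) (nheads M) l)
     + dim M * length (vocab M) + length (vocab M)"

text \<open>A sequence state X is a function (position, coordinate) => real; positions are
  0-based internally, position i carries the positional value i+1.\<close>

definition embed :: "transformer \<Rightarrow> tok list \<Rightarrow> nat \<Rightarrow> nat \<Rightarrow> real" where
  "embed M s i k = emb M (s ! i) k + (if k = pos_coord M then real (Suc i) else 0)"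

definition attn_score :: "nat \<Rightarrow> layer \<Rightarrow> (nat \<Rightarrow> nat \<Rightarrow> real) \<Rightarrow> nat \<Rightarrow> nat \<Rightarrow> nat \<Rightarrow> real" where
  "attn_score d l X h i j =
     (\<Sum>a<dhead l. (\<Sum>k<d. X i k * WQ l h k a) * (\<Sum>k<d. X j k * WK l h k a))
       / sqrt (real (dhead l))"

definition attn_head :: "nat \<Rightarrow> layer \<Rightarrow> (nat \<Rightarrow> nat \<Rightarrow> real) \<Rightarrow> nat \<Rightarrow> nat \<Rightarrow> nat \<Rightarrow> real" where
  "attn_head d l X h i c =
     (\<Sum>j\<le>i. exp (attn_score d l X h i j) * (\<Sum>k<d. X j k * WV l h k c))
       / (\<Sum>j\<le>i. exp (attn_score d l X h i j))"

definition mha :: "nat \<Rightarrow> nat \<Rightarrow> layer \<Rightarrow> (nat \<Rightarrow> nat \<Rightarrow> real) \<Rightarrow> nat \<Rightarrow> nat \<Rightarrow> real" where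
  "mha d H l X i k = (\<Sum>h<H. \<Sum>c<dhead l. attn_head d l X h i c * WO l (h * dhead l + c) k)"

definition mlp :: "nat \<Rightarrow> layer \<Rightarrow> (nat \<Rightarrow> nat \<Rightarrow> real) \<Rightarrow> nat \<Rightarrow> nat \<Rightarrow> real" where
  "mlp d l Y i k =
     (let u = (\<lambda>r. (\<Sum>q<d. Y i q * W1 l q r) + b1 l r) in
      (\<Sum>r<dmlp l. (u r * max 0 (u (dmlp l + r))) * W2 l r k) + b2 l k)"

definition apply_layer :: "nat \<Rightarrow> nat \<Rightarrow> layer \<Rightarrow> (nat \<Rightarrow> nat \<Rightarrow> real) \<Rightarrow> nat \<Rightarrow> nat \<Rightarrow> real" where
  "apply_layer d H l X =
     (let Y = (\<lambda>i k. X i k + mha d H l X i k) in (\<lambda>i k. Y i k + mlp d l Y i k))"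

definition forward :: "transformer \<Rightarrow> tok list \<Rightarrow> nat \<Rightarrow> nat \<Rightarrow> real" where
  "forward M s = fold (apply_layer (dim M) (nheads M)) (layers M) (embed M s)"

definition logits :: "transformer \<Rightarrow> tok list \<Rightarrow> nat \<Rightarrow> real" where
  "logits M s j = (\<Sum>k<dim M. forward M s (length s - 1) k * Wout M k j) + bout M j"

text \<open>Greedy decoding: the arg max over the vocabulary; ties are broken in favour of
  the earliest vocabulary entry.\<close>
definition next_tok :: "transformer \<Rightarrow> tok list \<Rightarrow> tok" where
  "next_tok M s = vocab M ! (LEAST j. j < length (vocab M) \<and>
       (\<forall>j'<length (vocab M). logits M s j' \<le> logits M s j))"

fun run :: "transformer \<Rightarrow> tok list \<Rightarrow> nat \<Rightarrow> tok list" where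
  "run M s 0 = s"
| "run M s (Suc t) = run M s t @ [next_tok M (run M s t)]"

text \<open>The t-th generated (CoT) token, t \<ge> 1.\<close>
definition gen_tok :: "transformer \<Rightarrow> tok list \<Rightarrow> nat \<Rightarrow> tok" where
  "gen_tok M s t = last (run M s t)"

definition halts_with :: "transformer \<Rightarrow> tok \<Rightarrow> tok \<Rightarrow> tok list \<Rightarrow> nat \<Rightarrow> nat \<Rightarrow> bool" where
  "halts_with M E0 E1 s t b \<longleftrightarrow>
     1 \<le> t \<and> gen_tok M s t \<in> {E0, E1} \<and>
     (\<forall>t'. 1 \<le> t' \<and> t' < t \<longrightarrow> gen_tok M s t' \<notin> {E0, E1}) \<and>
     b = (if gen_tok M s t = E0 then 0 else 1)"

text \<open>A formula is a list of clauses, a clause a list of nonzero integer literals.\<close>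
definition valid_formula :: "nat \<Rightarrow> nat \<Rightarrow> int list list \<Rightarrow> bool" where
  "valid_formula p c F \<longleftrightarrow> length F \<le> c \<and>
     (\<forall>C\<in>set F. 1 \<le> length C \<and> length C \<le> 3 \<and>
        (\<forall>l\<in>set C. l \<noteq> 0 \<and> \<bar>l\<bar> \<le> int p))"

definition dimacs :: "int list list \<Rightarrow> tok list" where
  "dimacs F = [BOS] @ concat (map (\<lambda>C. map Lit C @ [Lit 0]) F) @ [SEP]"

definition DIMACS :: "nat \<Rightarrow> nat \<Rightarrow> tok list set" where
  "DIMACS p c = dimacs ` {F. valid_formula p c F}"

definition lit_true :: "(nat \<Rightarrow> bool) \<Rightarrow> int \<Rightarrow> bool" where
  "lit_true \<alpha> l \<longleftrightarrow> (if l > 0 then \<alpha> (nat l) else \<not> \<alpha> (nat (- l)))"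

definition satisfiable :: "int list list \<Rightarrow> bool" where
  "satisfiable F \<longleftrightarrow> (\<exists>\<alpha>. \<forall>C\<in>set F. \<exists>l\<in>set C. lit_true \<alpha> l)"

text \<open>3-SAT_{p,c}: value on an encoding x in DIMACS(p,c) (the decoding is unique).\<close>
definition three_sat :: "nat \<Rightarrow> nat \<Rightarrow> tok list \<Rightarrow> nat" where
  "three_sat p c x =
     (if \<exists>F. valid_formula p c F \<and> x = dimacs F \<and> satisfiable F then 1 else 0)"

definition dimacs_alphabet :: "nat \<Rightarrow> tok set" where
  "dimacs_alphabet p = {BOS, SEP} \<union> {Lit i | i. \<bar>i\<bar> \<le> int p}"

definition decides_3sat_within :: "transformer \<Rightarrow> nat \<Rightarrow> nat \<Rightarrow> nat \<Rightarrow> bool" where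
  "decides_3sat_within M p c N \<longleftrightarrow>
     dimacs_alphabet p \<subseteq> set (vocab M) \<and>
     (\<exists>E0 E1. E0 \<in> set (vocab M) \<and> E1 \<in> set (vocab M) \<and> E0 \<noteq> E1 \<and>
        (\<forall>x\<in>DIMACS p c. \<exists>t\<le>N. halts_with M E0 E1 x t (three_sat p c x)))"

end

(*
  The model enumerates all 2^p assignments with a binary counter that lives in its own chain
  of thought. Each generated token increments the counter, and bit v of the current assignment
  is the prefix sum of a per-token feature, recovered by uniform attention followed by a
  multiplication with the position. A sharp attention keyed on the number of separators before
  a token lets every clause separator collect the literals of its own clause. A second sharp
  attention from the last position weights each separator by the attention mass on the true
  literals of its clause, so the mass it puts on separators is small if every clause is
  satisfied and at least of order 1/N if some clause is falsified, N bounding the context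
  length. The output layer then emits the SAT stop token, the UNSAT stop token once the counter
  is full, or the increment token for the lowest false bit; temperatures polynomial in N make
  the soft attentions sharp enough.
*)
theory Submission
  imports Defs
begin

lemma sum_eq_single:
  assumes "finite A" "a \<in> A" "\<And>x. x \<in> A \<Longrightarrow> x \<noteq> a \<Longrightarrow> f x = 0"
  shows "sum f A = f a"
  using assms by (simp add: sum.remove sum.neutral)

lemma sum_mult_indicator:
  "(\<Sum>k<(d::nat). f k * (if k = b then w else 0)) = (if b < d then f b * (w::real) else 0)"
  by (simp add: if_distrib sum.delta' cong: if_cong)

lemma sum_mult_indicator_interval:
  assumes "a + n \<le> d"
  shows "(\<Sum>k<d. f k * (if a \<le> k \<and> k < a + n then 1 else 0)) = (\<Sum>v<n. (f::nat \<Rightarrow> real) (a + v))"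
proof -
  have "(\<Sum>k<d. f k * (if a \<le> k \<and> k < a + n then 1 else 0)) = (\<Sum>k\<in>{a..<a+n}. f k)"
    using assms by (intro sum.mono_neutral_cong_right) auto
  also have "\<dots> = (\<Sum>v<n. f (a + v))"
    by (simp add: sum.atLeastLessThan_shift_0 atLeast0LessThan add.commute)
  finally show ?thesis .
qed

lemma softmax_mean_lower:
  fixes a v :: "nat \<Rightarrow> real"
  assumes v_nonneg: "\<And>j. j \<le> i \<Longrightarrow> 0 \<le> v j" and a_le: "\<And>j. j \<le> i \<Longrightarrow> a j \<le> A"
    and "m \<le> i" "1 \<le> v m" "A - t \<le> a m"
  shows "exp (- t) / real (Suc i) \<le> (\<Sum>j\<le>i. exp (a j) * v j) / (\<Sum>j\<le>i. exp (a j))"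
proof -
  have "exp (A - t) \<le> exp (a m)" using assms(5) by simp
  also have "\<dots> \<le> exp (a m) * v m" using assms(4) by simp
  also have "\<dots> \<le> (\<Sum>j\<le>i. exp (a j) * v j)"
    using assms(3) v_nonneg by (intro member_le_sum) auto
  finally have num: "exp (A - t) \<le> (\<Sum>j\<le>i. exp (a j) * v j)" .
  have den: "(\<Sum>j\<le>i. exp (a j)) \<le> real (Suc i) * exp A"
    using sum_mono[of "{..i}" "\<lambda>j. exp (a j)" "\<lambda>_. exp A"] a_le by simp
  have den_pos: "0 < (\<Sum>j\<le>i. exp (a j))" by (intro sum_pos) auto
  have "exp (A - t) = exp A * exp (- t)" by (simp flip: exp_add)
  then have "exp (- t) / real (Suc i) = exp (A - t) / (real (Suc i) * exp A)" by simp
  also have "\<dots> \<le> exp (A - t) / (\<Sum>j\<le>i. exp (a j))"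
    using den den_pos by (intro divide_left_mono) auto
  also have "\<dots> \<le> (\<Sum>j\<le>i. exp (a j) * v j) / (\<Sum>j\<le>i. exp (a j))"
    using num den_pos by (intro divide_right_mono) auto
  finally show ?thesis .
qed

lemma softmax_mean_upper:
  fixes a v :: "nat \<Rightarrow> real"
  assumes v_range: "\<And>j. j \<le> i \<Longrightarrow> 0 \<le> v j \<and> v j \<le> 1"
    and a_small: "\<And>j. j \<le> i \<Longrightarrow> v j \<noteq> 0 \<Longrightarrow> a j \<le> A - t"
    and "m \<le> i" "A \<le> a m"
  shows "(\<Sum>j\<le>i. exp (a j) * v j) / (\<Sum>j\<le>i. exp (a j)) \<le> real (Suc i) * exp (- t)"
proof -
  have "exp (a j) * v j \<le> exp (A - t)" if "j \<le> i" for j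
  proof (cases "v j = 0")
    case False
    then have "exp (a j) \<le> exp (A - t)" using a_small that by simp
    moreover have "exp (a j) * v j \<le> exp (a j)" using v_range[OF that] by (simp add: mult_left_le)
    ultimately show ?thesis by linarith
  qed simp
  then have num: "(\<Sum>j\<le>i. exp (a j) * v j) \<le> real (Suc i) * exp (A - t)"
    using sum_mono[of "{..i}" "\<lambda>j. exp (a j) * v j" "\<lambda>_. exp (A - t)"] by simp
  have "exp A \<le> exp (a m)" using assms(4) by simp
  also have "\<dots> \<le> (\<Sum>j\<le>i. exp (a j))" using assms(3) by (intro member_le_sum) auto
  finally have den: "exp A \<le> (\<Sum>j\<le>i. exp (a j))" .
  have "(\<Sum>j\<le>i. exp (a j) * v j) / (\<Sum>j\<le>i. exp (a j)) \<le> real (Suc i) * exp (A - t) / exp A"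
    using num den by (intro frac_le) (auto intro!: sum_nonneg simp: v_range)
  also have "\<dots> = real (Suc i) * exp (- t)" by (simp add: exp_diff exp_minus divide_inverse)
  finally show ?thesis .
qed

lemma mha_no_heads: "dhead l = 0 \<Longrightarrow> mha d H l X i k = 0"
  by (simp add: mha_def)

lemma mlp_no_neurons: "dmlp l = 0 \<Longrightarrow> mlp d l Y i k = b2 l k"
  by (simp add: mlp_def)

lemma apply_layer_attention_only:
  "dmlp l = 0 \<Longrightarrow> b2 l = (\<lambda>k. 0) \<Longrightarrow> apply_layer d H l X = (\<lambda>i k. X i k + mha d H l X i k)"
  by (simp add: apply_layer_def mlp_no_neurons Let_def)

lemma apply_layer_mlp_only:
  "dhead l = 0 \<Longrightarrow> apply_layer d H l X = (\<lambda>i k. X i k + mlp d l X i k)"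
  by (simp add: apply_layer_def mha_no_heads Let_def)

lemma mha_first_head:
  assumes "0 < H" and WO_zero: "\<And>r k. dhead l \<le> r \<Longrightarrow> WO l r k = 0"
  shows "mha d H l X i k = (\<Sum>c<dhead l. attn_head d l X 0 i c * WO l c k)"
proof -
  obtain H' where H: "H = Suc H'" using assms(1) by (cases H) auto
  have "WO l (Suc h * dhead l + c) k = 0" for h c by (rule WO_zero) simp
  then show ?thesis by (simp add: mha_def H sum.lessThan_Suc_shift del: sum.lessThan_Suc)
qed

lemma next_tok_eq_strict_argmax:
  assumes "j0 < length (vocab M)"
    and "\<And>j. j < length (vocab M) \<Longrightarrow> j \<noteq> j0 \<Longrightarrow> logits M s j < logits M s j0"
  shows "next_tok M s = vocab M ! j0"
proof -
  have "(LEAST j. j < length (vocab M) \<and> (\<forall>j'<length (vocab M). logits M s j' \<le> logits M s j)) = j0"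
  proof (rule Least_equality)
    show "j0 < length (vocab M) \<and> (\<forall>j'<length (vocab M). logits M s j' \<le> logits M s j0)"
      using assms by (metis less_le order_refl)
  next
    fix y assume "y < length (vocab M) \<and> (\<forall>j'<length (vocab M). logits M s j' \<le> logits M s y)"
    then show "j0 \<le> y" using assms by (metis linorder_not_less order_refl)
  qed
  then show ?thesis by (simp add: next_tok_def)
qed

lemma run_eq_generated:
  assumes "\<And>k. k < length out \<Longrightarrow> next_tok M (s @ take k out) = out ! k"
  shows "k \<le> length out \<Longrightarrow> run M s k = s @ take k out"
proof (induction k)
  case (Suc k)
  then show ?case using assms[of k] by (simp add: take_Suc_conv_app_nth)
qed simp

lemma halts_with_generated:
  assumes gen: "\<And>k. k < length out \<Longrightarrow> next_tok M (s @ take k out) = out ! k"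
    and "out \<noteq> []" "last out \<in> {E0, E1}" "\<forall>t\<in>set (butlast out). t \<notin> {E0, E1}"
  shows "halts_with M E0 E1 s (length out) (if last out = E0 then 0 else 1)"
proof -
  have gen_tok: "gen_tok M s t = out ! (t - 1)" if t: "1 \<le> t" "t \<le> length out" for t
  proof -
    obtain t' where "t = Suc t'" using t(1) by (cases t) auto
    then show ?thesis
      using t run_eq_generated[OF gen t(2)] by (auto simp: gen_tok_def take_Suc_conv_app_nth)
  qed
  have "gen_tok M s t \<notin> {E0, E1}" if "1 \<le> t" "t < length out" for t
    using that assms(4) gen_tok[of t] nth_butlast[of "t - 1" out] nth_mem[of "t - 1" "butlast out"]
    by simp
  moreover have "gen_tok M s (length out) = last out"
    using gen_tok[of "length out"] assms(2) by (simp add: last_conv_nth Suc_le_eq)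
  ultimately show ?thesis using assms(2,3) by (simp add: halts_with_def Suc_le_eq)
qed

section \<open>The construction\<close>

definition literal_of_index :: "nat \<Rightarrow> nat \<Rightarrow> int" where
  "literal_of_index p c = (if c < p then int c + 1 else - (int (c - p) + 1))"

definition incr_tok :: "nat \<Rightarrow> tok" where
  "incr_tok t = Aux (t + 2)"

text \<open>Emitting incr_tok t increments the binary counter whose bit v is the prefix sum of
  feature v: it sets the lowest false bit t and clears the true bits below it.\<close>
definition incr_feature :: "tok \<Rightarrow> nat \<Rightarrow> real" where
  "incr_feature tok v =
     (case tok of Aux n \<Rightarrow> if n = v + 2 then 1 else if v + 2 < n then -1 else 0 | _ \<Rightarrow> 0)"

definition literal_feature :: "nat \<Rightarrow> tok \<Rightarrow> nat \<Rightarrow> real" where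
  "literal_feature p tok c = (if tok = Lit (literal_of_index p c) then 1 else 0)"

definition sep_indicator :: "tok \<Rightarrow> real" where
  "sep_indicator tok = (if tok = Lit 0 then 1 else 0)"

text \<open>Layout of the residual stream (width 6 + 8p): 0 constant 1; 1 position; 2 separator
  indicator; 3 number of separators so far; 4 its mean; 5 violation signal;
  [6, 6+p) increment features; [6+p, 6+2p) their prefix means; [6+2p, 6+3p) their prefix
  sums, i.e. the current counter bits; [6+3p, 6+4p) one-hot lowest false bit;
  [6+4p, 6+6p) one-hot literal of the token; [6+6p, 6+8p) literals of the current clause.\<close>
definition sat_emb :: "nat \<Rightarrow> tok \<Rightarrow> nat \<Rightarrow> real" where
  "sat_emb p tok k = (if k = 0 then 1 else if k = 2 then sep_indicator tok
     else if 6 \<le> k \<and> k < 6 + p then incr_feature tok (k - 6)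
     else if 6 + 4*p \<le> k \<and> k < 6 + 6*p then literal_feature p tok (k - (6 + 4*p)) else 0)"

definition zero_layer :: layer where
  "zero_layer = \<lparr>dhead = 0, dmlp = 0, WQ = (\<lambda>h k a. 0), WK = (\<lambda>h k a. 0), WV = (\<lambda>h k a. 0),
     WO = (\<lambda>r k. 0), W1 = (\<lambda>q r. 0), b1 = (\<lambda>r. 0), W2 = (\<lambda>r k. 0), b2 = (\<lambda>k. 0)\<rparr>"

definition mean_layer :: "nat \<Rightarrow> layer" where
  "mean_layer p = \<lparr>dhead = p + 1, dmlp = 0, WQ = (\<lambda>h k a. 0), WK = (\<lambda>h k a. 0),
     WV = (\<lambda>h k c. if c = 0 then (if k = 2 then 1 else 0) else if k = 6 + (c - 1) then 1 else 0),
     WO = (\<lambda>r k. if r = 0 then (if k = 4 then 1 else 0)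
                 else if r \<le> p \<and> k = 6 + p + (r - 1) then 1 else 0),
     W1 = (\<lambda>q r. 0), b1 = (\<lambda>r. 0), W2 = (\<lambda>r k. 0), b2 = (\<lambda>k. 0)\<rparr>"

text \<open>Multiplies the prefix means by the position (coordinate 1): u * ReLU(i + 1).\<close>
definition count_layer :: "nat \<Rightarrow> layer" where
  "count_layer p = \<lparr>dhead = 0, dmlp = p + 1, WQ = (\<lambda>h k a. 0), WK = (\<lambda>h k a. 0),
     WV = (\<lambda>h k a. 0), WO = (\<lambda>r k. 0),
     W1 = (\<lambda>q r. if r = 0 then (if q = 4 then 1 else 0)
                 else if r \<le> p then (if q = 6 + p + (r - 1) then 1 else 0)
                 else if q = 1 then 1 else 0),
     b1 = (\<lambda>r. 0),
     W2 = (\<lambda>r k. if r = 0 then (if k = 3 then 1 else 0) else if k = 6 + 2*p + (r - 1) then 1 else 0),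
     b2 = (\<lambda>k. 0)\<rparr>"

text \<open>Attention score \<beta> times the number of separators strictly before the key, so that
  for large \<beta> position i attends to the tokens of its own clause.\<close>
definition clause_layer :: "nat \<Rightarrow> real \<Rightarrow> layer" where
  "clause_layer p \<beta> = \<lparr>dhead = 2*p, dmlp = 0,
     WQ = (\<lambda>h k a. if k = 0 \<and> a = 0 then \<beta> * sqrt (real (2*p)) else 0),
     WK = (\<lambda>h k a. if a = 0 then (if k = 3 then 1 else if k = 2 then -1 else 0) else 0),
     WV = (\<lambda>h k c. if k = 6 + 4*p + c then 1 else 0),
     WO = (\<lambda>r k. if r < 2*p \<and> k = 6 + 6*p + r then 1 else 0),
     W1 = (\<lambda>q r. 0), b1 = (\<lambda>r. 0), W2 = (\<lambda>r k. 0), b2 = (\<lambda>k. 0)\<rparr>"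

text \<open>Neuron r outputs max 0 (1 - r - b_r + (b_0 + ... + b_(r-1))), which for 0/1 bits is 1
  exactly when r is the lowest false bit.\<close>
definition lowest_false_layer :: "nat \<Rightarrow> layer" where
  "lowest_false_layer p = \<lparr>dhead = 0, dmlp = p, WQ = (\<lambda>h k a. 0), WK = (\<lambda>h k a. 0),
     WV = (\<lambda>h k a. 0), WO = (\<lambda>r k. 0),
     W1 = (\<lambda>q r. if r < p then 0 else if q = 6 + 2*p + (r - p) then -1
                 else if 6 + 2*p \<le> q \<and> q < 6 + 2*p + (r - p) then 1 else 0),
     b1 = (\<lambda>r. if r < p then 1 else 1 - real (r - p)),
     W2 = (\<lambda>r k. if k = 6 + 3*p + r then 1 else 0),
     b2 = (\<lambda>k. 0)\<rparr>"

text \<open>The score of a separator is -\<gamma> times the weight of the literals of its clause that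
  are true under the current bits; the head averages the separator indicator.\<close>
definition check_layer :: "nat \<Rightarrow> real \<Rightarrow> layer" where
  "check_layer p \<gamma> = \<lparr>dhead = p + 1, dmlp = 0,
     WQ = (\<lambda>h k a. if a < p then (if k = 6 + 2*p + a then 1 else 0) else if k = 0 then 1 else 0),
     WK = (\<lambda>h k a. - (\<gamma> * sqrt (real (p + 1))) *
             (if a < p then (if k = 6 + 6*p + a then 1 else if k = 6 + 7*p + a then -1 else 0)
              else if 6 + 7*p \<le> k \<and> k < 6 + 8*p then 1 else 0)),
     WV = (\<lambda>h k c. if c = 0 \<and> k = 2 then 1 else 0),
     WO = (\<lambda>r k. if r = 0 \<and> k = 5 then 1 else 0),
     W1 = (\<lambda>q r. 0), b1 = (\<lambda>r. 0), W2 = (\<lambda>r k. 0), b2 = (\<lambda>k. 0)\<rparr>"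

text \<open>Aux 0 and Aux 1 are the stop tokens for unsatisfiable and satisfiable.\<close>
definition sat_vocab :: "nat \<Rightarrow> tok list" where
  "sat_vocab p = [Aux 0, Aux 1] @ map incr_tok [0..<p] @ [BOS, SEP] @ map Lit [- int p..int p]"

text \<open>N bounds the length of the context. Only one head and five layers do any work;
  the remaining heads are ignored by the output projections and the last two layers are zero.\<close>
definition sat_transformer :: "nat \<Rightarrow> real \<Rightarrow> transformer" where
  "sat_transformer p N = \<lparr>vocab = sat_vocab p, dim = 6 + 8*p, nheads = 5,
     layers = [mean_layer p, count_layer p, clause_layer p (6 * N ^ 4 * real p), lowest_false_layer p,
               check_layer p (6 * N ^ 3), zero_layer, zero_layer],
     emb = sat_emb p, pos_coord = 1,
     Wout = (\<lambda>k j. if j = 1 \<and> k = 5 then - 36 * N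
                   else if 2 \<le> j \<and> j < p + 2 \<and> k = 6 + 3*p + (j - 2) then 1 else 0),
     bout = (\<lambda>j. if j = 0 then 1/2 else if j = 1 then 9 else if j < p + 2 then 0 else -1)\<rparr>"

lemma sat_vocab_nth:
  "length (sat_vocab p) = 3 * p + 5" "sat_vocab p ! 0 = Aux 0" "sat_vocab p ! 1 = Aux 1"
  "r < p \<Longrightarrow> sat_vocab p ! (r + 2) = incr_tok r"
  by (simp_all add: sat_vocab_def nth_append)

lemma sat_transformer_shape:
  "vocab (sat_transformer p N) = sat_vocab p" "dim (sat_transformer p N) = 6 + 8 * p"
  "nheads (sat_transformer p N) = 5" "length (layers (sat_transformer p N)) = 7"
  by (simp_all add: sat_transformer_def)

section \<open>The forward pass\<close>

definition seps_upto :: "tok list \<Rightarrow> nat \<Rightarrow> real" where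
  "seps_upto s i = (\<Sum>j\<le>i. sep_indicator (s ! j))"

definition bit_sum :: "tok list \<Rightarrow> nat \<Rightarrow> nat \<Rightarrow> real" where
  "bit_sum s i v = (\<Sum>j\<le>i. incr_feature (s ! j) v)"

definition X0 :: "nat \<Rightarrow> tok list \<Rightarrow> nat \<Rightarrow> nat \<Rightarrow> real" where
  "X0 p s i k = sat_emb p (s ! i) k + (if k = 1 then real (Suc i) else 0)"

definition X1 :: "nat \<Rightarrow> tok list \<Rightarrow> nat \<Rightarrow> nat \<Rightarrow> real" where
  "X1 p s i k = X0 p s i k + (if k = 4 then seps_upto s i / real (Suc i)
     else if 6 + p \<le> k \<and> k < 6 + 2*p then bit_sum s i (k - (6 + p)) / real (Suc i) else 0)"

definition X2 :: "nat \<Rightarrow> tok list \<Rightarrow> nat \<Rightarrow> nat \<Rightarrow> real" where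
  "X2 p s i k = X1 p s i k + (if k = 3 then seps_upto s i
     else if 6 + 2*p \<le> k \<and> k < 6 + 3*p then bit_sum s i (k - (6 + 2*p)) else 0)"

definition clause_attn :: "nat \<Rightarrow> real \<Rightarrow> tok list \<Rightarrow> nat \<Rightarrow> nat \<Rightarrow> real" where
  "clause_attn p \<beta> s i c =
     (\<Sum>j\<le>i. exp (\<beta> * (seps_upto s j - sep_indicator (s ! j))) * literal_feature p (s ! j) c)
       / (\<Sum>j\<le>i. exp (\<beta> * (seps_upto s j - sep_indicator (s ! j))))"

definition X3 :: "nat \<Rightarrow> real \<Rightarrow> tok list \<Rightarrow> nat \<Rightarrow> nat \<Rightarrow> real" where
  "X3 p \<beta> s i k = X2 p s i k +
     (if 6 + 6*p \<le> k \<and> k < 6 + 8*p then clause_attn p \<beta> s i (k - (6 + 6*p)) else 0)"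

definition lowest_false_gate :: "tok list \<Rightarrow> nat \<Rightarrow> nat \<Rightarrow> real" where
  "lowest_false_gate s i r = max 0 (1 - real r - bit_sum s i r + (\<Sum>u<r. bit_sum s i u))"

definition X4 :: "nat \<Rightarrow> real \<Rightarrow> tok list \<Rightarrow> nat \<Rightarrow> nat \<Rightarrow> real" where
  "X4 p \<beta> s i k = X3 p \<beta> s i k +
     (if 6 + 3*p \<le> k \<and> k < 6 + 4*p then lowest_false_gate s i (k - (6 + 3*p)) else 0)"

definition clause_score :: "nat \<Rightarrow> real \<Rightarrow> tok list \<Rightarrow> nat \<Rightarrow> nat \<Rightarrow> real" where
  "clause_score p \<beta> s i j =
     (\<Sum>a<p. bit_sum s i a * (clause_attn p \<beta> s j a - clause_attn p \<beta> s j (p + a)))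
     + (\<Sum>v<p. clause_attn p \<beta> s j (p + v))"

definition violation :: "nat \<Rightarrow> real \<Rightarrow> real \<Rightarrow> tok list \<Rightarrow> nat \<Rightarrow> real" where
  "violation p \<beta> \<gamma> s i =
     (\<Sum>j\<le>i. exp (- \<gamma> * clause_score p \<beta> s i j) * sep_indicator (s ! j))
       / (\<Sum>j\<le>i. exp (- \<gamma> * clause_score p \<beta> s i j))"

definition X5 :: "nat \<Rightarrow> real \<Rightarrow> real \<Rightarrow> tok list \<Rightarrow> nat \<Rightarrow> nat \<Rightarrow> real" where
  "X5 p \<beta> \<gamma> s i k = X4 p \<beta> s i k + (if k = 5 then violation p \<beta> \<gamma> s i else 0)"

lemma X0_simps:
  "X0 p s j 0 = 1" "X0 p s j 1 = real (Suc j)" "X0 p s j 2 = sep_indicator (s ! j)"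
  "v < p \<Longrightarrow> X0 p s j (6 + v) = incr_feature (s ! j) v"
  "X0 p s j 3 = 0" "X0 p s j 4 = 0" "X0 p s j 5 = 0"
  "v < p \<Longrightarrow> X0 p s j (6 + p + v) = 0"
  "v < p \<Longrightarrow> X0 p s j (6 + 2*p + v) = 0"
  "v < p \<Longrightarrow> X0 p s j (6 + 3*p + v) = 0"
  "c < 2*p \<Longrightarrow> X0 p s j (6 + 4*p + c) = literal_feature p (s ! j) c"
  "c < 2*p \<Longrightarrow> X0 p s j (6 + 6*p + c) = 0"
  by (auto simp: X0_def sat_emb_def)

lemma mean_layer_apply: "apply_layer (6 + 8*p) 5 (mean_layer p) (X0 p s) = X1 p s"
proof -
  let ?d = "6 + 8*p"
  define head where "head = attn_head ?d (mean_layer p) (X0 p s) 0"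
  have "(\<Sum>k<?d. X0 p s j k * WV (mean_layer p) 0 k c) =
        (if c = 0 then sep_indicator (s ! j) else incr_feature (s ! j) (c - 1))"
    if "c < p + 1" for j c
    using that by (cases "c = 0") (auto simp: mean_layer_def sum_mult_indicator X0_def sat_emb_def)
  then have head: "head i c = (if c = 0 then seps_upto s i else bit_sum s i (c - 1)) / real (Suc i)"
    if "c < p + 1" for i c
    using that by (simp add: head_def attn_head_def attn_score_def mean_layer_def seps_upto_def bit_sum_def)
  have "mha ?d 5 (mean_layer p) (X0 p s) i k = (\<Sum>c<p + 1. head i c * WO (mean_layer p) c k)" for i k
    unfolding head_def by (subst mha_first_head) (auto simp: mean_layer_def)
  also have "\<dots> i k = (if k = 4 then seps_upto s i / real (Suc i)
     else if 6 + p \<le> k \<and> k < 6 + 2*p then bit_sum s i (k - (6 + p)) / real (Suc i) else 0)" for i k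
  proof -
    consider "k = 4" | "6 + p \<le> k \<and> k < 6 + 2*p" | "k \<noteq> 4" "\<not> (6 + p \<le> k \<and> k < 6 + 2*p)" by blast
    then show ?thesis
    proof cases
      case 1 then show ?thesis by (subst sum_eq_single[of _ 0]) (auto simp: mean_layer_def head)
    next
      case 2 then show ?thesis
        by (subst sum_eq_single[of _ "k - (5 + p)"]) (auto simp: mean_layer_def head)
    qed (auto simp: mean_layer_def intro!: sum.neutral)
  qed
  finally show ?thesis
    by (simp add: apply_layer_attention_only mean_layer_def X1_def fun_eq_iff)
qed

lemma X1_simps:
  "X1 p s i 0 = 1" "X1 p s i 1 = real (Suc i)" "X1 p s i 2 = sep_indicator (s ! i)"
  "X1 p s i 4 = seps_upto s i / real (Suc i)"
  "v < p \<Longrightarrow> X1 p s i (6 + p + v) = bit_sum s i v / real (Suc i)"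
  "X1 p s i 3 = 0" "X1 p s i 5 = 0"
  "v < p \<Longrightarrow> X1 p s i (6 + 2*p + v) = 0"
  "v < p \<Longrightarrow> X1 p s i (6 + 3*p + v) = 0"
  "c < 2*p \<Longrightarrow> X1 p s i (6 + 4*p + c) = literal_feature p (s ! i) c"
  "c < 2*p \<Longrightarrow> X1 p s i (6 + 6*p + c) = 0"
  by (auto simp: X1_def X0_simps X0_def sat_emb_def)

lemma count_layer_apply: "apply_layer (6 + 8*p) 5 (count_layer p) (X1 p s) = X2 p s"
proof -
  let ?d = "6 + 8*p"
  define u where "u i r = (\<Sum>q<?d. X1 p s i q * W1 (count_layer p) q r)" for i r
  have u_mean: "u i r = (if r = 0 then seps_upto s i else bit_sum s i (r - 1)) / real (Suc i)"
    if "r < p + 1" for i r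
    using that by (cases "r = 0")
      (auto simp: u_def count_layer_def sum_mult_indicator X1_def X0_def sat_emb_def)
  have u_pos: "u i r = real (Suc i)" if "p < r" for i r
    using that by (simp add: u_def count_layer_def sum_mult_indicator X1_def X0_def sat_emb_def)
  have "mlp ?d (count_layer p) (X1 p s) i k =
        (\<Sum>r<p + 1. (u i r * max 0 (u i (p + 1 + r))) * W2 (count_layer p) r k)" for i k
    by (simp add: mlp_def u_def count_layer_def Let_def)
  also have "\<dots> i k =
        (\<Sum>r<p + 1. (if r = 0 then seps_upto s i else bit_sum s i (r - 1)) * W2 (count_layer p) r k)"
    for i k by (intro sum.cong refl) (simp add: u_mean u_pos del: of_nat_Suc)
  also have "\<dots> i k = (if k = 3 then seps_upto s i
     else if 6 + 2*p \<le> k \<and> k < 6 + 3*p then bit_sum s i (k - (6 + 2*p)) else 0)" for i k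
  proof -
    consider "k = 3" | "6 + 2*p \<le> k \<and> k < 6 + 3*p" | "k \<noteq> 3" "\<not> (6 + 2*p \<le> k \<and> k < 6 + 3*p)"
      by blast
    then show ?thesis
    proof cases
      case 1 then show ?thesis by (subst sum_eq_single[of _ 0]) (auto simp: count_layer_def)
    next
      case 2 then show ?thesis
        by (subst sum_eq_single[of _ "k - (5 + 2*p)"]) (auto simp: count_layer_def)
    qed (auto simp: count_layer_def intro!: sum.neutral)
  qed
  finally show ?thesis
    by (simp add: apply_layer_mlp_only count_layer_def X2_def fun_eq_iff)
qed

lemma X2_simps:
  "X2 p s i 0 = 1" "X2 p s i 2 = sep_indicator (s ! i)" "X2 p s i 3 = seps_upto s i"
  "X2 p s i 5 = 0"
  "v < p \<Longrightarrow> X2 p s i (6 + 2*p + v) = bit_sum s i v"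
  "v < p \<Longrightarrow> X2 p s i (6 + 3*p + v) = 0"
  "c < 2*p \<Longrightarrow> X2 p s i (6 + 4*p + c) = literal_feature p (s ! i) c"
  "c < 2*p \<Longrightarrow> X2 p s i (6 + 6*p + c) = 0"
  by (auto simp: X2_def X1_simps X1_def X0_def sat_emb_def)

lemma clause_layer_apply: "apply_layer (6 + 8*p) 5 (clause_layer p \<beta>) (X2 p s) = X3 p \<beta> s"
proof (cases "p = 0")
  case True
  then show ?thesis
    by (simp add: apply_layer_attention_only clause_layer_def mha_no_heads X3_def fun_eq_iff)
next
  case False
  let ?d = "6 + 8*p" and ?L = "clause_layer p \<beta>"
  define head where "head = attn_head ?d ?L (X2 p s) 0"
  have key: "(\<Sum>k<?d. X2 p s j k * WK ?L 0 k 0) = seps_upto s j - sep_indicator (s ! j)" for j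
  proof -
    have "(\<Sum>k<?d. X2 p s j k * WK ?L 0 k 0) =
          (\<Sum>k<?d. X2 p s j k * (if k = 3 then 1 else 0)) - (\<Sum>k<?d. X2 p s j k * (if k = 2 then 1 else 0))"
      unfolding sum_subtractf[symmetric] by (intro sum.cong) (auto simp: clause_layer_def)
    then show ?thesis by (simp add: sum_mult_indicator X2_simps)
  qed
  have "attn_score ?d ?L (X2 p s) 0 i j = \<beta> * (seps_upto s j - sep_indicator (s ! j))" for i j
  proof -
    have "attn_score ?d ?L (X2 p s) 0 i j =
          (\<beta> * sqrt (real (2*p)) * (\<Sum>k<?d. X2 p s j k * WK ?L 0 k 0)) / sqrt (real (2*p))"
      unfolding attn_score_def using False
      by (subst sum_eq_single[of _ 0]) (auto simp: clause_layer_def sum_mult_indicator X2_simps)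
    then show ?thesis using False by (simp add: key)
  qed
  then have head: "head i c = clause_attn p \<beta> s i c" if "c < 2*p" for i c
    using that by (simp add: head_def attn_head_def clause_attn_def clause_layer_def
        sum_mult_indicator X2_simps)
  have "mha ?d 5 ?L (X2 p s) i k = (\<Sum>c<2*p. head i c * WO ?L c k)" for i k
    unfolding head_def by (subst mha_first_head) (auto simp: clause_layer_def)
  also have "\<dots> i k =
      (if 6 + 6*p \<le> k \<and> k < 6 + 8*p then clause_attn p \<beta> s i (k - (6 + 6*p)) else 0)" for i k
  proof (cases "6 + 6*p \<le> k \<and> k < 6 + 8*p")
    case True
    then show ?thesis by (subst sum_eq_single[of _ "k - (6 + 6*p)"]) (auto simp: clause_layer_def head)
  qed (auto simp: clause_layer_def intro!: sum.neutral)
  finally show ?thesis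
    by (simp add: apply_layer_attention_only clause_layer_def X3_def fun_eq_iff)
qed

lemma X3_simps:
  "X3 p \<beta> s i 0 = 1" "X3 p \<beta> s i 2 = sep_indicator (s ! i)" "X3 p \<beta> s i 5 = 0"
  "v < p \<Longrightarrow> X3 p \<beta> s i (6 + 2*p + v) = bit_sum s i v"
  "v < p \<Longrightarrow> X3 p \<beta> s i (6 + 3*p + v) = 0"
  "c < 2*p \<Longrightarrow> X3 p \<beta> s i (6 + 6*p + c) = clause_attn p \<beta> s i c"
  by (auto simp: X3_def X2_simps)

lemma lowest_false_layer_apply:
  "apply_layer (6 + 8*p) 5 (lowest_false_layer p) (X3 p \<beta> s) = X4 p \<beta> s"
proof -
  let ?d = "6 + 8*p" and ?L = "lowest_false_layer p"
  define u where "u i r = (\<Sum>q<?d. X3 p \<beta> s i q * W1 ?L q r) + b1 ?L r" for i r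
  have u_one: "u i r = 1" if "r < p" for i r
    using that by (simp add: u_def lowest_false_layer_def)
  have u_gate: "u i (p + r) = 1 - real r - bit_sum s i r + (\<Sum>v<r. bit_sum s i v)" if "r < p" for i r
  proof -
    have "(\<Sum>q<?d. X3 p \<beta> s i q * W1 ?L q (p + r)) =
          (\<Sum>q<?d. X3 p \<beta> s i q * (if 6 + 2*p \<le> q \<and> q < 6 + 2*p + r then 1 else 0))
          - (\<Sum>q<?d. X3 p \<beta> s i q * (if q = 6 + 2*p + r then 1 else 0))"
      unfolding sum_subtractf[symmetric] by (intro sum.cong) (auto simp: lowest_false_layer_def)
    also have "\<dots> = (\<Sum>v<r. bit_sum s i v) - bit_sum s i r"
      using that by (simp add: sum_mult_indicator_interval sum_mult_indicator X3_simps)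
    finally show ?thesis using that by (simp add: u_def lowest_false_layer_def)
  qed
  have "mlp ?d ?L (X3 p \<beta> s) i k = (\<Sum>r<p. (u i r * max 0 (u i (p + r))) * W2 ?L r k)" for i k
    by (simp add: mlp_def u_def lowest_false_layer_def Let_def)
  also have "\<dots> i k = (\<Sum>r<p. lowest_false_gate s i r * (if k = 6 + 3*p + r then 1 else 0))" for i k
    by (intro sum.cong refl) (simp add: u_one u_gate lowest_false_gate_def lowest_false_layer_def)
  also have "\<dots> i k =
      (if 6 + 3*p \<le> k \<and> k < 6 + 4*p then lowest_false_gate s i (k - (6 + 3*p)) else 0)" for i k
  proof (cases "6 + 3*p \<le> k \<and> k < 6 + 4*p")
    case True
    then show ?thesis by (subst sum_eq_single[of _ "k - (6 + 3*p)"]) auto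
  qed (auto intro!: sum.neutral)
  finally show ?thesis
    by (simp add: apply_layer_mlp_only lowest_false_layer_def X4_def fun_eq_iff)
qed

lemma X4_simps:
  "X4 p \<beta> s i 0 = 1" "X4 p \<beta> s i 2 = sep_indicator (s ! i)" "X4 p \<beta> s i 5 = 0"
  "v < p \<Longrightarrow> X4 p \<beta> s i (6 + 2*p + v) = bit_sum s i v"
  "v < p \<Longrightarrow> X4 p \<beta> s i (6 + 3*p + v) = lowest_false_gate s i v"
  "c < 2*p \<Longrightarrow> X4 p \<beta> s i (6 + 6*p + c) = clause_attn p \<beta> s i c"
  by (auto simp: X4_def X3_simps)

lemma check_layer_score:
  "attn_score (6 + 8*p) (check_layer p \<gamma>) (X4 p \<beta> s) 0 i j = - \<gamma> * clause_score p \<beta> s i j"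
proof -
  let ?d = "6 + 8*p" and ?L = "check_layer p \<gamma>" and ?g = "\<gamma> * sqrt (real (p + 1))"
  let ?ca = "clause_attn p \<beta> s"
  have query: "(\<Sum>k<?d. X4 p \<beta> s i k * WQ ?L 0 k a) = (if a < p then bit_sum s i a else 1)" for a
    by (cases "a < p") (simp_all add: check_layer_def sum_mult_indicator X4_simps)
  have key_bit: "(\<Sum>k<?d. X4 p \<beta> s j k * WK ?L 0 k a) = - ?g * (?ca j a - ?ca j (p + a))"
    if "a < p" for a
  proof -
    have "(\<Sum>k<?d. X4 p \<beta> s j k * WK ?L 0 k a) =
       - ?g * ((\<Sum>k<?d. X4 p \<beta> s j k * (if k = 6 + 6*p + a then 1 else 0))
               - (\<Sum>k<?d. X4 p \<beta> s j k * (if k = 6 + 6*p + (p + a) then 1 else 0)))"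
      unfolding sum_subtractf[symmetric] sum_distrib_left
      using that by (intro sum.cong) (auto simp: check_layer_def)
    then show ?thesis using that by (simp only: sum_mult_indicator X4_simps) simp
  qed
  have key_const: "(\<Sum>k<?d. X4 p \<beta> s j k * WK ?L 0 k p) = - ?g * (\<Sum>v<p. ?ca j (p + v))"
  proof -
    have "(\<Sum>k<?d. X4 p \<beta> s j k * WK ?L 0 k p) =
          - ?g * (\<Sum>k<?d. X4 p \<beta> s j k * (if 6 + 7*p \<le> k \<and> k < 6 + 7*p + p then 1 else 0))"
      unfolding sum_distrib_left by (intro sum.cong) (auto simp: check_layer_def)
    also have "\<dots> = - ?g * (\<Sum>v<p. X4 p \<beta> s j (6 + 7*p + v))"
      by (subst sum_mult_indicator_interval) auto
    also have "\<dots> = - ?g * (\<Sum>v<p. ?ca j (p + v))"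
      using X4_simps(6)[of "p + v" p \<beta> s j for v] by (simp add: add.assoc)
    finally show ?thesis .
  qed
  have "attn_score ?d ?L (X4 p \<beta> s) 0 i j =
     (\<Sum>a<p + 1. (if a < p then bit_sum s i a else 1) * (\<Sum>k<?d. X4 p \<beta> s j k * WK ?L 0 k a))
     / sqrt (real (p + 1))"
    unfolding attn_score_def query by (simp add: check_layer_def del: sum.lessThan_Suc)
  also have "\<dots> = ((\<Sum>a<p. bit_sum s i a * (- ?g * (?ca j a - ?ca j (p + a))))
                     + - ?g * (\<Sum>v<p. ?ca j (p + v))) / sqrt (real (p + 1))"
    by (simp add: key_bit key_const)
  also have "\<dots> = - ?g * clause_score p \<beta> s i j / sqrt (real (p + 1))"
    by (simp only: clause_score_def sum_distrib_left mult.left_commute[of "bit_sum s i _"]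
        distrib_left)
  finally show ?thesis by simp
qed

lemma check_layer_apply:
  "apply_layer (6 + 8*p) 5 (check_layer p \<gamma>) (X4 p \<beta> s) = X5 p \<beta> \<gamma> s"
proof -
  let ?d = "6 + 8*p" and ?L = "check_layer p \<gamma>"
  have "(\<Sum>k<?d. X4 p \<beta> s j k * WV ?L 0 k 0) = sep_indicator (s ! j)" for j
    by (simp add: check_layer_def sum_mult_indicator X4_simps)
  then have head: "attn_head ?d ?L (X4 p \<beta> s) 0 i 0 = violation p \<beta> \<gamma> s i" for i
    unfolding attn_head_def check_layer_score violation_def by simp
  have "mha ?d 5 ?L (X4 p \<beta> s) i k = (\<Sum>c<p + 1. attn_head ?d ?L (X4 p \<beta> s) 0 i c * WO ?L c k)"
    for i k by (subst mha_first_head) (auto simp: check_layer_def)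
  also have "\<dots> i k = (if k = 5 then violation p \<beta> \<gamma> s i else 0)" for i k
    by (subst sum_eq_single[of _ 0]) (auto simp: head, simp_all add: check_layer_def)
  finally show ?thesis
    by (simp add: apply_layer_attention_only check_layer_def X5_def fun_eq_iff)
qed

lemma zero_layer_apply: "apply_layer d H zero_layer X = X"
  by (simp add: apply_layer_def zero_layer_def mlp_def mha_def)

lemma forward_sat_transformer: "forward (sat_transformer p N) s = X5 p (6 * N ^ 4 * real p) (6 * N ^ 3) s"
proof -
  have "embed (sat_transformer p N) s = X0 p s"
    by (auto simp: embed_def sat_transformer_def X0_def fun_eq_iff)
  then show ?thesis
    by (simp add: forward_def sat_transformer_def mean_layer_apply count_layer_apply clause_layer_apply
        lowest_false_layer_apply check_layer_apply zero_layer_apply)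
qed

lemma logits_sat_transformer:
  "logits (sat_transformer p N) s j =
    (if j = 0 then 1/2
     else if j = 1 then 9 - 36 * N * violation p (6 * N ^ 4 * real p) (6 * N ^ 3) s (length s - 1)
     else if j < p + 2 then lowest_false_gate s (length s - 1) (j - 2) else -1)"
  (is "_ = ?rhs")
proof -
  let ?X = "X5 p (6 * N ^ 4 * real p) (6 * N ^ 3) s (length s - 1)"
  have "logits (sat_transformer p N) s j = (\<Sum>k<6 + 8*p. ?X k *
     (if j = 1 \<and> k = 5 then - 36 * N else if 2 \<le> j \<and> j < p + 2 \<and> k = 6 + 3*p + (j - 2) then 1 else 0))
     + (if j = 0 then 1/2 else if j = 1 then 9 else if j < p + 2 then 0 else -1)"
    unfolding logits_def forward_sat_transformer by (simp add: sat_transformer_def)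
  also have "\<dots> = ?rhs"
  proof -
    consider "j = 1" | "2 \<le> j \<and> j < p + 2" | "j \<noteq> 1" "\<not> (2 \<le> j \<and> j < p + 2)" by blast
    then show ?thesis
    proof cases
      case 1
      then have w: "(if j = 1 \<and> k = 5 then - 36 * N else if 2 \<le> j \<and> j < p + 2 \<and> k = 6 + 3*p + (j - 2)
                   then 1 else 0) = (if k = 5 then - 36 * N else 0)" for k by auto
      show ?thesis unfolding w using 1 by (simp add: sum_mult_indicator X5_def X4_simps)
    next
      case 2
      then have w: "(if j = 1 \<and> k = 5 then - 36 * N else if 2 \<le> j \<and> j < p + 2 \<and> k = 6 + 3*p + (j - 2)
                   then 1 else 0) = (if k = 6 + 3*p + (j - 2) then 1 else 0)" for k by auto
      have "?X (6 + 3*p + (j - 2)) = lowest_false_gate s (length s - 1) (j - 2)"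
        using 2 X4_simps(5)[of "j - 2" p] by (simp add: X5_def less_diff_conv2)
      then show ?thesis unfolding w using 2 by (simp add: sum_mult_indicator)
    qed (auto intro!: sum.neutral)
  qed
  finally show ?thesis .
qed

definition seps_before :: "tok list \<Rightarrow> nat \<Rightarrow> nat" where
  "seps_before s j = length (filter (\<lambda>t. t = Lit 0) (take j s))"

definition occurs_in_clause :: "tok list \<Rightarrow> nat \<Rightarrow> int \<Rightarrow> bool" where
  "occurs_in_clause s z l \<longleftrightarrow> (\<exists>j\<le>z. s ! j = Lit l \<and> seps_before s j = seps_before s z)"

definition clause_lits :: "tok list \<Rightarrow> nat \<Rightarrow> int set" where
  "clause_lits s z = {l. l \<noteq> 0 \<and> occurs_in_clause s z l}"

definition separators :: "tok list \<Rightarrow> nat set" where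
  "separators s = {z. z < length s \<and> s ! z = Lit 0}"

lemma seps_before_0 [simp]: "seps_before s 0 = 0"
  by (simp add: seps_before_def)

lemma seps_before_append: "seps_before (xs @ ys) j = seps_before xs j + seps_before ys (j - length xs)"
  by (simp add: seps_before_def)

lemma seps_before_mono: "j \<le> j' \<Longrightarrow> seps_before s j \<le> seps_before s j'"
proof -
  assume "j \<le> j'"
  then have "take j' s = take j s @ drop j (take j' s)"
    by (metis append_take_drop_id min.absorb1 take_take)
  then show ?thesis unfolding seps_before_def by (metis filter_append le_add1 length_append)
qed

lemma seps_before_Suc:
  "j < length s \<Longrightarrow> seps_before s (Suc j) = seps_before s j + (if s ! j = Lit 0 then 1 else 0)"
  by (simp add: seps_before_def take_Suc_conv_app_nth)

lemma seps_upto_eq_seps_before: "j < length s \<Longrightarrow> seps_upto s j = real (seps_before s (Suc j))"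
proof (induction j)
  case 0
  then show ?case using seps_before_Suc[of 0 s] by (simp add: seps_upto_def seps_before_def sep_indicator_def)
next
  case (Suc j)
  then show ?case using seps_before_Suc[of "Suc j" s] by (simp add: seps_upto_def sep_indicator_def)
qed

lemma clause_attn_eq:
  assumes "z < length s"
  shows "clause_attn p \<beta> s z c =
    (\<Sum>j\<le>z. exp (\<beta> * real (seps_before s j)) * literal_feature p (s ! j) c)
      / (\<Sum>j\<le>z. exp (\<beta> * real (seps_before s j)))"
proof -
  have "seps_upto s j - sep_indicator (s ! j) = real (seps_before s j)" if "j \<le> z" for j
    using that assms seps_upto_eq_seps_before[of j s] seps_before_Suc[of j s]
    by (simp add: sep_indicator_def)
  then show ?thesis unfolding clause_attn_def by (intro arg_cong2[where f = "(/)"] sum.cong) auto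
qed

lemma clause_attn_nonneg: "0 \<le> clause_attn p \<beta> s i c"
  unfolding clause_attn_def by (intro divide_nonneg_nonneg sum_nonneg) (auto simp: literal_feature_def)

lemma clause_attn_at_BOS: "s ! 0 = BOS \<Longrightarrow> clause_attn p \<beta> s 0 c = 0"
  by (simp add: clause_attn_def literal_feature_def)

lemma clause_attn_ge_if_occurs:
  assumes "z < length s" "0 \<le> \<beta>" "occurs_in_clause s z (literal_of_index p c)"
  shows "1 / real (Suc z) \<le> clause_attn p \<beta> s z c"
proof -
  obtain j0 where j0: "j0 \<le> z" "s ! j0 = Lit (literal_of_index p c)" "seps_before s j0 = seps_before s z"
    using assms(3) by (auto simp: occurs_in_clause_def)
  have "exp (- 0) / real (Suc z) \<le> clause_attn p \<beta> s z c"
    unfolding clause_attn_eq[OF assms(1)]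
    by (rule softmax_mean_lower[where A = "\<beta> * real (seps_before s z)" and m = j0])
      (use j0 assms(2) in \<open>auto simp: literal_feature_def intro!: mult_left_mono seps_before_mono\<close>)
  then show ?thesis by simp
qed

lemma clause_attn_le_if_not_occurs:
  assumes "z < length s" "0 \<le> \<beta>" "\<not> occurs_in_clause s z (literal_of_index p c)"
  shows "clause_attn p \<beta> s z c \<le> real (Suc z) * exp (- \<beta>)"
  unfolding clause_attn_eq[OF assms(1)]
proof (rule softmax_mean_upper[where A = "\<beta> * real (seps_before s z)" and m = z])
  fix j assume j: "j \<le> z" "literal_feature p (s ! j) c \<noteq> 0"
  then have "seps_before s j \<noteq> seps_before s z"
    using assms(3) by (auto simp: occurs_in_clause_def literal_feature_def split: if_splits)
  moreover have "seps_before s j \<le> seps_before s z" using j(1) by (rule seps_before_mono)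
  ultimately have "real (seps_before s j) \<le> real (seps_before s z) - 1" by linarith
  then show "\<beta> * real (seps_before s j) \<le> \<beta> * real (seps_before s z) - \<beta>"
    using assms(2) by (metis mult_left_mono right_diff_distrib mult.right_neutral)
qed (auto simp: literal_feature_def)

definition clause_toks :: "int list \<Rightarrow> tok list" where
  "clause_toks C = map Lit C @ [Lit 0]"

definition dimacs_body :: "int list list \<Rightarrow> tok list" where
  "dimacs_body F = BOS # concat (map clause_toks F)"

lemma dimacs_eq_body: "dimacs F = dimacs_body F @ [SEP]"
  by (simp add: dimacs_def dimacs_body_def clause_toks_def[abs_def])

lemma dimacs_body_snoc: "dimacs_body (F @ [C]) = dimacs_body F @ clause_toks C"
  by (simp add: dimacs_body_def)

lemma length_dimacs: "valid_formula p c F \<Longrightarrow> length (dimacs F) \<le> 4 * c + 2"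
proof -
  assume F: "valid_formula p c F"
  have "length (concat (map clause_toks F)) \<le> 4 * length F"
    using F by (induction F) (auto simp: valid_formula_def clause_toks_def)
  then show ?thesis using F by (simp add: dimacs_eq_body dimacs_body_def valid_formula_def)
qed

lemma clause_toks_append_inj:
  "0 \<notin> set C \<Longrightarrow> 0 \<notin> set C' \<Longrightarrow> clause_toks C @ R = clause_toks C' @ R' \<Longrightarrow>
    C = C' \<and> R = R'"
proof (induction C arbitrary: C')
  case Nil
  then show ?case by (cases C') (auto simp: clause_toks_def)
next
  case (Cons a C)
  then show ?case by (cases C') (auto simp: clause_toks_def)
qed

lemma dimacs_inj:
  "(\<forall>C\<in>set F. 0 \<notin> set C) \<Longrightarrow> (\<forall>C\<in>set F'. 0 \<notin> set C) \<Longrightarrow> dimacs F = dimacs F' \<Longrightarrow>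
    F = F'"
proof (induction F arbitrary: F')
  case Nil
  then show ?case by (cases F') (auto simp: dimacs_eq_body dimacs_body_def clause_toks_def)
next
  case (Cons C F)
  then obtain C' F'' where F': "F' = C' # F''"
    by (cases F') (auto simp: dimacs_eq_body dimacs_body_def clause_toks_def)
  then have "C = C' \<and> concat (map clause_toks F) @ [SEP] = concat (map clause_toks F'') @ [SEP]"
    using Cons.prems by (intro clause_toks_append_inj) (auto simp: dimacs_eq_body dimacs_body_def)
  then show ?case using Cons.IH[of F''] Cons.prems F' by (auto simp: dimacs_eq_body dimacs_body_def)
qed

lemma occurs_in_clause_append:
  "z < length t \<Longrightarrow> occurs_in_clause (t @ r) z l = occurs_in_clause t z l"
  unfolding occurs_in_clause_def by (intro ex_cong1) (auto simp: nth_append seps_before_append)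

lemma clause_lits_append: "z < length t \<Longrightarrow> clause_lits (t @ r) z = clause_lits t z"
  by (simp add: clause_lits_def occurs_in_clause_append)

lemma separators_append: "separators (t @ r) = separators t \<union> (+) (length t) ` separators r"
proof -
  have "z \<in> separators (t @ r) \<longleftrightarrow> z \<in> separators t \<union> (+) (length t) ` separators r" for z
  proof (cases "z < length t")
    case False
    then obtain q where "z = length t + q" by (metis le_add_diff_inverse not_less)
    then show ?thesis by (auto simp: separators_def nth_append)
  qed (auto simp: separators_def nth_append)
  then show ?thesis by blast
qed

lemma separators_eq_empty: "Lit 0 \<notin> set r \<Longrightarrow> separators r = {}"
  by (auto simp: separators_def dest: nth_mem)

lemma separators_clause_toks: "0 \<notin> set C \<Longrightarrow> separators (clause_toks C) = {length C}"
  by (auto simp: separators_def clause_toks_def nth_append less_Suc_eq dest: nth_mem)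

lemma seps_before_lt_total:
  assumes "s \<noteq> []" "last s = Lit 0" "j < length s"
  shows "seps_before s j < seps_before s (length s)"
proof -
  have "Lit 0 \<in> set (drop j s)" using assms by (metis drop_eq_Nil last_drop last_in_set not_le)
  then have "0 < length (filter (\<lambda>t. t = Lit 0) (drop j s))" by (simp add: filter_empty_conv)
  then show ?thesis
    unfolding seps_before_def by (metis append_take_drop_id filter_append length_append
        less_add_same_cancel1 take_all_iff order_refl)
qed

lemma seps_before_dimacs_body_lt:
  assumes "0 < j" "j < length (dimacs_body F)"
  shows "seps_before (dimacs_body F) j < seps_before (dimacs_body F) (length (dimacs_body F))"
proof (rule seps_before_lt_total)
  show "dimacs_body F \<noteq> []" by (simp add: dimacs_body_def)
  have "F \<noteq> []" using assms by (auto simp: dimacs_body_def)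
  then obtain F' C where "F = F' @ [C]" by (metis rev_exhaust)
  then show "last (dimacs_body F) = Lit 0" by (simp add: dimacs_body_snoc clause_toks_def)
qed (use assms in simp)

lemma clause_lits_last_clause:
  assumes "0 \<notin> set C"
  shows "clause_lits (dimacs_body (F @ [C])) (length (dimacs_body F) + length C) = set C"
proof -
  let ?t = "dimacs_body F" and ?s = "dimacs_body (F @ [C])"
  let ?L = "length ?t" and ?m = "length C"
  have s: "?s = ?t @ map Lit C @ [Lit 0]" by (simp add: dimacs_body_snoc clause_toks_def)
  have seps_clause: "seps_before ?s (?L + q) = seps_before ?t ?L" if "q \<le> ?m" for q
    using that assms by (auto simp: s seps_before_append seps_before_def filter_empty_conv
        dest: in_set_takeD)
  have seps_old: "seps_before ?s j < seps_before ?t ?L" if "0 < j" "j < ?L" for j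
    using seps_before_dimacs_body_lt[OF that] that(2) by (simp add: s seps_before_append)
  show ?thesis
  proof (intro equalityI subsetI)
    fix l assume "l \<in> clause_lits ?s (?L + ?m)"
    then obtain j where j: "l \<noteq> 0" "j \<le> ?L + ?m" "?s ! j = Lit l"
      "seps_before ?s j = seps_before ?t ?L"
      using seps_clause[of ?m] by (auto simp: clause_lits_def occurs_in_clause_def)
    consider "j = 0" | "0 < j" "j < ?L" | "?L \<le> j" "j < ?L + ?m" | "j = ?L + ?m" using j(2) by linarith
    then show "l \<in> set C"
    proof cases
      case 1 then show ?thesis using j(3) by (simp add: s nth_append dimacs_body_def)
    next
      case 2 then show ?thesis using j(4) seps_old[OF 2] by simp
    next
      case 3
      then have "j - ?L < ?m" by linarith
      then have "l = C ! (j - ?L)" using j(3) 3 by (simp add: s nth_append)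
      with \<open>j - ?L < ?m\<close> show ?thesis by simp
    next
      case 4 then show ?thesis using j(1,3) by (simp add: s nth_append)
    qed
  next
    fix l assume "l \<in> set C"
    then have "l \<noteq> 0" using assms by auto
    from \<open>l \<in> set C\<close> obtain q where q: "q < ?m" "C ! q = l" by (auto simp: in_set_conv_nth)
    then have "?s ! (?L + q) = Lit l" by (simp add: s nth_append)
    then show "l \<in> clause_lits ?s (?L + ?m)"
      using q \<open>l \<noteq> 0\<close> seps_clause[of q] seps_clause[of ?m]
      by (auto simp: clause_lits_def occurs_in_clause_def intro!: exI[of _ "?L + q"])
  qed
qed

theorem clause_lits_separators_dimacs_body:
  "(\<forall>C\<in>set F. 0 \<notin> set C) \<Longrightarrow> clause_lits (dimacs_body F) ` separators (dimacs_body F) = set ` set F"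
proof (induction F rule: rev_induct)
  case Nil
  then show ?case by (auto simp: dimacs_body_def separators_def)
next
  case (snoc C F)
  let ?t = "dimacs_body F" and ?s = "dimacs_body (F @ [C])"
  have sep: "separators ?s = insert (length ?t + length C) (separators ?t)"
    using snoc.prems by (simp add: dimacs_body_snoc separators_append separators_clause_toks)
  have "clause_lits ?s ` separators ?t = clause_lits ?t ` separators ?t"
    by (intro image_cong refl) (simp add: separators_def dimacs_body_snoc clause_lits_append)
  then have "clause_lits ?s ` separators ?s = insert (set C) (clause_lits ?t ` separators ?t)"
    unfolding sep using snoc.prems clause_lits_last_clause[of C F] by simp
  then show ?case using snoc by simp
qed

corollary clause_lits_separators_dimacs_prefix:
  assumes "\<forall>C\<in>set F. 0 \<notin> set C" "Lit 0 \<notin> set r"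
  shows "clause_lits (dimacs_body F @ r) ` separators (dimacs_body F @ r) = set ` set F"
proof -
  have "separators (dimacs_body F @ r) = separators (dimacs_body F)"
    using assms(2) by (simp add: separators_append separators_eq_empty)
  moreover have "clause_lits (dimacs_body F @ r) ` separators (dimacs_body F)
      = clause_lits (dimacs_body F) ` separators (dimacs_body F)"
    by (intro image_cong refl) (simp add: separators_def clause_lits_append)
  ultimately show ?thesis using clause_lits_separators_dimacs_body[OF assms(1)] by simp
qed

section \<open>Detecting a falsified clause\<close>

text \<open>Bit v holds the value of variable x_(v+1); x_0 does not occur in a formula.\<close>
definition bits_assignment :: "(nat \<Rightarrow> bool) \<Rightarrow> nat \<Rightarrow> bool" where
  "bits_assignment b u = b (u - 1)"

definition sat_by_bits :: "(nat \<Rightarrow> bool) \<Rightarrow> int list list \<Rightarrow> bool" where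
  "sat_by_bits b F \<longleftrightarrow> (\<forall>C\<in>set F. \<exists>l\<in>set C. lit_true (bits_assignment b) l)"

lemma lit_true_bits_assignment:
  assumes "\<forall>v<p. b v = \<sigma> (v + 1)" "l \<noteq> 0" "\<bar>l\<bar> \<le> int p"
  shows "lit_true (bits_assignment b) l = lit_true \<sigma> l"
proof (cases "l > 0")
  case True
  then have "nat l - 1 < p" "Suc (nat l - 1) = nat l" using assms(2,3) by auto
  then show ?thesis using True assms(1) by (simp add: lit_true_def bits_assignment_def)
next
  case False
  then have "nat (- l) - 1 < p" "Suc (nat (- l) - 1) = nat (- l)" using assms(2,3) by auto
  then show ?thesis using False assms(1) by (simp add: lit_true_def bits_assignment_def)
qed

lemma literal_of_index_nonzero: "literal_of_index p c \<noteq> 0"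
  by (simp add: literal_of_index_def)

lemma lit_true_literal_of_index:
  "v < p \<Longrightarrow> lit_true (bits_assignment b) (literal_of_index p v) = b v"
  "v < p \<Longrightarrow> lit_true (bits_assignment b) (literal_of_index p (p + v)) = (\<not> b v)"
  by (simp_all add: lit_true_def literal_of_index_def bits_assignment_def nat_add_distrib)

lemma literal_of_index_cases:
  assumes "l \<noteq> 0" "\<bar>l\<bar> \<le> int p"
  obtains v where "v < p" "l = literal_of_index p v" | v where "v < p" "l = literal_of_index p (p + v)"
proof (cases "l > 0")
  case True
  then have "nat l - 1 < p" "l = literal_of_index p (nat l - 1)"
    using assms by (auto simp: literal_of_index_def)
  then show ?thesis using that(1) by blast
next
  case False
  then have "nat (- l) - 1 < p" "l = literal_of_index p (p + (nat (- l) - 1))"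
    using assms by (auto simp: literal_of_index_def)
  then show ?thesis using that(2) by blast
qed

lemma clause_score_eq:
  assumes "\<forall>v<p. bit_sum s i v = of_bool (b v)"
  shows "clause_score p \<beta> s i j =
    (\<Sum>v<p. if b v then clause_attn p \<beta> s j v else clause_attn p \<beta> s j (p + v))"
  unfolding clause_score_def sum.distrib[symmetric] using assms by (intro sum.cong) auto

lemma clause_score_nonneg:
  assumes "\<forall>v<p. bit_sum s i v = of_bool (b v)"
  shows "0 \<le> clause_score p \<beta> s i j"
  by (auto simp: clause_score_eq[OF assms] intro!: sum_nonneg clause_attn_nonneg)

lemma clause_score_at_BOS:
  assumes "\<forall>v<p. bit_sum s i v = of_bool (b v)" "s ! 0 = BOS"
  shows "clause_score p \<beta> s i 0 = 0"
  unfolding clause_score_eq[OF assms(1)] by (intro sum.neutral) (simp add: clause_attn_at_BOS[OF assms(2)])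

lemma clause_score_ge_if_satisfied:
  assumes bits: "\<forall>v<p. bit_sum s i v = of_bool (b v)"
    and "z < length s" "0 \<le> \<beta>" and C: "clause_lits s z = set C" "\<forall>l\<in>set C. \<bar>l\<bar> \<le> int p"
    and sat: "\<exists>l\<in>set C. lit_true (bits_assignment b) l"
  shows "1 / real (Suc z) \<le> clause_score p \<beta> s i z"
proof -
  let ?T = "\<lambda>v. if b v then clause_attn p \<beta> s z v else clause_attn p \<beta> s z (p + v)"
  obtain l where l: "l \<in> set C" "lit_true (bits_assignment b) l" using sat by blast
  then have "l \<noteq> 0" "\<bar>l\<bar> \<le> int p" "occurs_in_clause s z l"
    using C by (auto simp: clause_lits_def)
  then obtain v where "v < p" "1 / real (Suc z) \<le> ?T v"
  proof (cases rule: literal_of_index_cases)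
    case (1 v)
    then have "b v" using l(2) lit_true_literal_of_index(1) by blast
    then show ?thesis using that[of v] 1 \<open>occurs_in_clause s z l\<close> clause_attn_ge_if_occurs[OF assms(2,3)]
      by simp
  next
    case (2 v)
    then have "\<not> b v" using l(2) lit_true_literal_of_index(2) by blast
    then show ?thesis using that[of v] 2 \<open>occurs_in_clause s z l\<close> clause_attn_ge_if_occurs[OF assms(2,3)]
      by simp
  qed
  moreover have "?T v \<le> (\<Sum>v<p. ?T v)"
    using \<open>v < p\<close> by (intro member_le_sum) (auto intro: clause_attn_nonneg)
  ultimately show ?thesis using clause_score_eq[OF bits] by simp
qed

lemma clause_score_le_if_falsified:
  assumes bits: "\<forall>v<p. bit_sum s i v = of_bool (b v)"
    and "z < length s" "0 \<le> \<beta>" and C: "clause_lits s z = set C"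
    and unsat: "\<forall>l\<in>set C. \<not> lit_true (bits_assignment b) l"
  shows "clause_score p \<beta> s i z \<le> real p * (real (Suc z) * exp (- \<beta>))"
proof -
  have "\<not> occurs_in_clause s z (literal_of_index p c)"
    if "lit_true (bits_assignment b) (literal_of_index p c)" for c
    using that unsat C literal_of_index_nonzero by (auto simp: clause_lits_def)
  then have "(if b v then clause_attn p \<beta> s z v else clause_attn p \<beta> s z (p + v))
             \<le> real (Suc z) * exp (- \<beta>)" if "v < p" for v
    using lit_true_literal_of_index[OF that, of b] clause_attn_le_if_not_occurs[OF assms(2,3)] by simp
  then have "clause_score p \<beta> s i z \<le> (\<Sum>v<p. real (Suc z) * exp (- \<beta>))"
    unfolding clause_score_eq[OF bits] by (intro sum_mono) simp
  then show ?thesis by simp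
qed

lemma violation_le:
  assumes bits: "\<forall>v<p. bit_sum s i v = of_bool (b v)" and "s ! 0 = BOS" "0 \<le> \<gamma>"
    and scores: "\<And>z. z \<le> i \<Longrightarrow> s ! z = Lit 0 \<Longrightarrow> \<delta> \<le> clause_score p \<beta> s i z"
  shows "violation p \<beta> \<gamma> s i \<le> real (Suc i) * exp (- (\<gamma> * \<delta>))"
  unfolding violation_def
proof (rule softmax_mean_upper[where A = 0 and m = 0])
  fix z assume "z \<le> i" "sep_indicator (s ! z) \<noteq> 0"
  then show "- \<gamma> * clause_score p \<beta> s i z \<le> 0 - \<gamma> * \<delta>"
    using scores assms(3) by (simp add: sep_indicator_def mult_left_mono split: if_splits)
qed (use clause_score_at_BOS[OF bits assms(2)] in \<open>auto simp: sep_indicator_def\<close>)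

lemma violation_ge:
  assumes bits: "\<forall>v<p. bit_sum s i v = of_bool (b v)" and "0 \<le> \<gamma>"
    and "z \<le> i" "s ! z = Lit 0" "clause_score p \<beta> s i z \<le> \<delta>" "\<gamma> * \<delta> \<le> 1"
  shows "exp (- 1) / real (Suc i) \<le> violation p \<beta> \<gamma> s i"
  unfolding violation_def
proof (rule softmax_mean_lower[where A = 0 and m = z])
  show "0 - 1 \<le> - \<gamma> * clause_score p \<beta> s i z"
    using assms(2,5,6) mult_left_mono[OF assms(5,2)] by simp
qed (use assms clause_score_nonneg[OF bits] in \<open>auto simp: sep_indicator_def\<close>)

section \<open>The binary counter\<close>

definition lowest_false :: "nat \<Rightarrow> (nat \<Rightarrow> bool) \<Rightarrow> nat" where
  "lowest_false p b = (LEAST t. t < p \<and> \<not> b t)"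

lemma lowest_false_spec:
  assumes "\<exists>t<p. \<not> b t"
  shows "lowest_false p b < p" "\<not> b (lowest_false p b)" "\<forall>u<lowest_false p b. b u"
proof -
  from assms obtain t where t: "t < p \<and> \<not> b t" by blast
  have least: "lowest_false p b < p \<and> \<not> b (lowest_false p b)"
    unfolding lowest_false_def by (rule LeastI[of _ t]) (use t in auto)
  then show "lowest_false p b < p" "\<not> b (lowest_false p b)" by auto
  show "\<forall>u<lowest_false p b. b u"
  proof (intro allI impI)
    fix u assume "u < lowest_false p b"
    then have "\<not> (u < p \<and> \<not> b u)" unfolding lowest_false_def by (rule not_less_Least)
    then show "b u" using \<open>u < lowest_false p b\<close> least by auto
  qed
qed

lemma lowest_false_iff:
  assumes "\<exists>t<p. \<not> b t" "r < p"
  shows "(\<not> b r \<and> (\<forall>u<r. b u)) \<longleftrightarrow> r = lowest_false p b"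
proof
  assume r: "\<not> b r \<and> (\<forall>u<r. b u)"
  have "lowest_false p b \<le> r" unfolding lowest_false_def by (rule Least_le) (use r assms in auto)
  moreover have "\<not> lowest_false p b < r" using r lowest_false_spec(2)[OF assms(1)] by auto
  ultimately show "r = lowest_false p b" by simp
qed (use lowest_false_spec[OF assms(1)] in auto)

lemma lowest_false_gate_eq:
  assumes bits: "\<forall>v<p. bit_sum s i v = of_bool (b v)" and "r < p"
  shows "lowest_false_gate s i r = of_bool (\<not> b r \<and> (\<forall>u<r. b u))"
proof -
  have sum: "(\<Sum>u<r. bit_sum s i u) = (\<Sum>u<r. of_bool (b u))" using assms by (intro sum.cong) auto
  show ?thesis
  proof (cases "\<forall>u<r. b u")
    case True
    then show ?thesis using sum bits assms(2) by (simp add: lowest_false_gate_def)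
  next
    case False
    then obtain u0 where "u0 < r" "\<not> b u0" by auto
    then have "(\<Sum>u<r. of_bool (b u)) < (\<Sum>u<r. 1::real)"
      by (intro sum_strict_mono_ex1) auto
    then have "(\<Sum>u<r. bit_sum s i u) \<le> real r - 1" using sum by simp
    moreover have "0 \<le> bit_sum s i r" using bits assms(2) by simp
    ultimately show ?thesis using False by (simp add: lowest_false_gate_def)
  qed
qed

definition bits_value :: "nat \<Rightarrow> (nat \<Rightarrow> bool) \<Rightarrow> nat" where
  "bits_value p b = (\<Sum>v<p. if b v then 2 ^ v else 0)"

definition bits_incr :: "nat \<Rightarrow> (nat \<Rightarrow> bool) \<Rightarrow> nat \<Rightarrow> bool" where
  "bits_incr p b v = (if v < lowest_false p b then False else if v = lowest_false p b then True else b v)"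

definition counter_bits :: "nat \<Rightarrow> nat \<Rightarrow> nat \<Rightarrow> bool" where
  "counter_bits p k = (bits_incr p ^^ k) (\<lambda>_. False)"

definition incr_trace :: "nat \<Rightarrow> nat \<Rightarrow> nat list" where
  "incr_trace p k = map (\<lambda>k'. lowest_false p (counter_bits p k')) [0..<k]"

lemma sum_powers_two: "(\<Sum>v<q. (2::nat) ^ v) + 1 = 2 ^ q"
  by (induction q) auto

lemma bits_value_Suc: "bits_value (Suc p) b = bits_value p b + (if b p then 2 ^ p else 0)"
  by (simp add: bits_value_def)

lemma bits_value_lt: "bits_value p b < 2 ^ p"
proof -
  have "bits_value p b \<le> (\<Sum>v<p. (2::nat) ^ v)" unfolding bits_value_def by (intro sum_mono) auto
  then show ?thesis using sum_powers_two[of p] by linarith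
qed

lemma bits_value_eq_max_iff: "bits_value p b + 1 = 2 ^ p \<longleftrightarrow> (\<forall>v<p. b v)"
proof
  assume all: "\<forall>v<p. b v"
  then have "bits_value p b = (\<Sum>v<p. (2::nat) ^ v)" unfolding bits_value_def by (intro sum.cong) auto
  then show "bits_value p b + 1 = 2 ^ p" using sum_powers_two[of p] by simp
next
  assume max: "bits_value p b + 1 = 2 ^ p"
  show "\<forall>v<p. b v"
  proof (rule ccontr)
    assume "\<not> (\<forall>v<p. b v)"
    then obtain t where "t < p" "\<not> b t" by auto
    then have "bits_value p b < (\<Sum>v<p. (2::nat) ^ v)"
      unfolding bits_value_def by (intro sum_strict_mono_ex1) auto
    then show False using max sum_powers_two[of p] by linarith
  qed
qed

lemma bits_value_inj: "bits_value p b = bits_value p b' \<Longrightarrow> \<forall>v<p. b v = b' v"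
proof (induction p)
  case (Suc p)
  have "b p = b' p"
    using Suc.prems bits_value_lt[of p b] bits_value_lt[of p b']
    by (auto simp: bits_value_Suc split: if_splits)
  then show ?case using Suc by (auto simp: bits_value_Suc less_Suc_eq)
qed simp

lemma bits_value_incr:
  assumes "\<exists>t<p. \<not> b t"
  shows "bits_value p (bits_incr p b) = bits_value p b + 1"
proof -
  let ?t = "lowest_false p b"
  note t = lowest_false_spec[OF assms]
  have "bits_value (Suc ?t + d) (bits_incr p b) = bits_value (Suc ?t + d) b + 1" for d
  proof (induction d)
    case 0
    have "bits_value ?t (bits_incr p b) = 0" by (simp add: bits_value_def bits_incr_def)
    moreover have "bits_value ?t b + 1 = 2 ^ ?t" using t(3) bits_value_eq_max_iff[of ?t b] by simp
    moreover have "bits_incr p b ?t" by (simp add: bits_incr_def)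
    ultimately show ?case using t(2) by (simp add: bits_value_Suc)
  next
    case (Suc d)
    then show ?case by (simp add: bits_value_Suc bits_incr_def)
  qed
  from this[of "p - Suc ?t"] show ?thesis using t(1) by simp
qed

lemma counter_bits_Suc: "counter_bits p (Suc k) = bits_incr p (counter_bits p k)"
  by (simp add: counter_bits_def)

lemma bits_value_counter_bits: "k < 2 ^ p \<Longrightarrow> bits_value p (counter_bits p k) = k"
proof (induction k)
  case (Suc k)
  then have "bits_value p (counter_bits p k) + 1 \<noteq> 2 ^ p" by simp
  then have "\<exists>t<p. \<not> counter_bits p k t" using bits_value_eq_max_iff[of p "counter_bits p k"] by auto
  then show ?case using Suc by (simp add: counter_bits_Suc bits_value_incr)
qed (simp add: counter_bits_def bits_value_def)

lemma counter_bits_all_iff: "k < 2 ^ p \<Longrightarrow> (\<forall>v<p. counter_bits p k v) \<longleftrightarrow> k + 1 = 2 ^ p"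
  using bits_value_eq_max_iff[of p "counter_bits p k"] bits_value_counter_bits[of k p] by simp

lemma counter_bits_surj: "\<exists>k<2 ^ p. \<forall>v<p. counter_bits p k v = b v"
proof (intro exI conjI)
  show "bits_value p b < 2 ^ p" by (rule bits_value_lt)
  then show "\<forall>v<p. counter_bits p (bits_value p b) v = b v"
    by (intro bits_value_inj) (rule bits_value_counter_bits)
qed

lemma incr_features_trace:
  "k < 2 ^ p \<Longrightarrow> v < p \<Longrightarrow>
    (\<Sum>t\<leftarrow>incr_trace p k. incr_feature (incr_tok t) v) = of_bool (counter_bits p k v)"
proof (induction k)
  case (Suc k)
  then have "\<exists>t<p. \<not> counter_bits p k t" using counter_bits_all_iff[of k p] by auto
  from lowest_false_spec[OF this] show ?case
    using Suc by (auto simp: incr_trace_def counter_bits_Suc bits_incr_def incr_feature_def incr_tok_def)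
qed (simp add: incr_trace_def counter_bits_def)

lemma bit_sum_last:
  assumes "s = dimacs F @ map incr_tok ts"
  shows "bit_sum s (length s - 1) v = (\<Sum>t\<leftarrow>ts. incr_feature (incr_tok t) v)"
proof -
  have "{..length s - 1} = {..<length s}" using assms by (auto simp: dimacs_def)
  then have "bit_sum s (length s - 1) v = (\<Sum>t\<leftarrow>s. incr_feature t v)"
    by (simp add: bit_sum_def sum_list_sum_nth atLeast0LessThan)
  also have "(\<Sum>t\<leftarrow>dimacs F. incr_feature t v) = (\<Sum>t\<leftarrow>dimacs F. 0)"
    by (intro arg_cong[where f = sum_list] map_cong) (auto simp: dimacs_def incr_feature_def split: if_splits)
  then have "(\<Sum>t\<leftarrow>s. incr_feature t v) = (\<Sum>t\<leftarrow>ts. incr_feature (incr_tok t) v)"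
    using assms by (simp add: comp_def)
  finally show ?thesis .
qed

lemma violation_small_if_satisfied:
  assumes bits: "\<forall>v<p. bit_sum s (length s - 1) v = of_bool (b v)"
    and s: "s = dimacs_body F @ r" "Lit 0 \<notin> set r" "real (length s) \<le> N"
    and F: "\<forall>C\<in>set F. 0 \<notin> set C \<and> (\<forall>l\<in>set C. \<bar>l\<bar> \<le> int p)"
    and sat: "sat_by_bits b F"
    and "0 \<le> \<beta>" "0 \<le> \<gamma>" and sharp: "N * exp (- (\<gamma> / N)) \<le> 1 / (6 * N)"
  shows "violation p \<beta> \<gamma> s (length s - 1) \<le> 1 / (6 * N)"
proof -
  let ?i = "length s - 1"
  have len: "0 < length s" "s ! 0 = BOS" using s(1) by (auto simp: dimacs_body_def)
  have "1 / N \<le> clause_score p \<beta> s ?i z" if "z \<le> ?i" "s ! z = Lit 0" for z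
  proof -
    have "z < length s" using that(1) len(1) by linarith
    then have "z \<in> separators s" using that(2) by (simp add: separators_def)
    then have "clause_lits s z \<in> clause_lits s ` separators s" by (rule imageI)
    also have "\<dots> = set ` set F" using clause_lits_separators_dimacs_prefix[of F r] F s by simp
    finally obtain C where "C \<in> set F" "clause_lits s z = set C" by blast
    then have "1 / real (Suc z) \<le> clause_score p \<beta> s ?i z"
      using \<open>z < length s\<close> F sat unfolding sat_by_bits_def
      by (intro clause_score_ge_if_satisfied[OF bits _ \<open>0 \<le> \<beta>\<close>]) auto
    moreover have "1 / N \<le> 1 / real (Suc z)"
    proof -
      have "real (Suc z) \<le> N" using \<open>z < length s\<close> s(3) by linarith
      then show ?thesis by (intro divide_left_mono) auto
    qed
    ultimately show ?thesis by linarith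
  qed
  then have "violation p \<beta> \<gamma> s ?i \<le> real (Suc ?i) * exp (- (\<gamma> * (1 / N)))"
    using violation_le[OF bits len(2) \<open>0 \<le> \<gamma>\<close>] by blast
  also have "\<dots> = real (length s) * exp (- (\<gamma> / N))" using len by simp
  also have "\<dots> \<le> N * exp (- (\<gamma> / N))" using s(3) by (intro mult_right_mono) auto
  finally show ?thesis using sharp by linarith
qed

lemma violation_large_if_falsified:
  assumes bits: "\<forall>v<p. bit_sum s (length s - 1) v = of_bool (b v)"
    and s: "s = dimacs_body F @ r" "Lit 0 \<notin> set r" "real (length s) \<le> N"
    and F: "\<forall>C\<in>set F. 0 \<notin> set C"
    and unsat: "C \<in> set F" "\<forall>l\<in>set C. \<not> lit_true (bits_assignment b) l"
    and "0 \<le> \<beta>" "0 \<le> \<gamma>" and sharp: "\<gamma> * (real p * (N * exp (- \<beta>))) \<le> 1"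
  shows "1 / (3 * N) \<le> violation p \<beta> \<gamma> s (length s - 1)"
proof -
  let ?i = "length s - 1"
  have len: "0 < length s" using s(1) by (simp add: dimacs_body_def)
  then have N: "0 < N" using s(3) by linarith
  have "set C \<in> clause_lits s ` separators s"
    using clause_lits_separators_dimacs_prefix[OF F s(2)] unsat(1) s(1) by simp
  then obtain z where z: "z \<in> separators s" "clause_lits s z = set C" by (metis imageE)
  then have "z < length s" "s ! z = Lit 0" by (auto simp: separators_def)
  have "clause_score p \<beta> s ?i z \<le> real p * (real (Suc z) * exp (- \<beta>))"
    using clause_score_le_if_falsified[OF bits \<open>z < length s\<close> \<open>0 \<le> \<beta>\<close> z(2) unsat(2)] .
  also have "\<dots> \<le> real p * (N * exp (- \<beta>))"
    using \<open>z < length s\<close> s(3) by (intro mult_left_mono mult_right_mono) auto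
  finally have "exp (- 1) / real (Suc ?i) \<le> violation p \<beta> \<gamma> s ?i"
    using \<open>z < length s\<close> \<open>s ! z = Lit 0\<close> sharp
    by (intro violation_ge[OF bits \<open>0 \<le> \<gamma>\<close>]) auto
  moreover have "1 / (3 * N) \<le> exp (- 1) / real (Suc ?i)"
  proof -
    have "1 / 3 \<le> exp (- 1 :: real)"
      using exp_le by (simp add: exp_minus divide_simps)
    then have "1 / (3 * N) \<le> exp (- 1) / N" using N by (simp add: divide_simps)
    also have "\<dots> \<le> exp (- 1) / real (Suc ?i)" using len s(3) N by (intro divide_left_mono) auto
    finally show ?thesis .
  qed
  ultimately show ?thesis by linarith
qed

context
  fixes p :: nat and s :: "tok list" and b :: "nat \<Rightarrow> bool" and N :: real
  assumes bits: "\<forall>v<p. bit_sum s (length s - 1) v = of_bool (b v)" and N_pos: "0 < N"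
begin

lemma logits_sat_transformer_bits:
  "logits (sat_transformer p N) s j =
    (if j = 0 then 1/2
     else if j = 1 then 9 - 36 * N * violation p (6 * N ^ 4 * real p) (6 * N ^ 3) s (length s - 1)
     else if j < p + 2 then of_bool (\<not> b (j - 2) \<and> (\<forall>u<j - 2. b u)) else -1)"
  using lowest_false_gate_eq[OF bits, of "j - 2"] by (simp add: logits_sat_transformer)

lemma next_tok_satisfied:
  assumes "violation p (6 * N ^ 4 * real p) (6 * N ^ 3) s (length s - 1) \<le> 1 / (6 * N)"
  shows "next_tok (sat_transformer p N) s = Aux 1"
proof -
  let ?M = "sat_transformer p N"
  have "3 \<le> logits ?M s 1"
    using mult_left_mono[OF assms, of "36 * N"] N_pos by (simp add: logits_sat_transformer_bits)
  moreover have "logits ?M s j \<le> 1" if "j \<noteq> 1" for j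
    using that by (simp add: logits_sat_transformer_bits)
  ultimately have "next_tok ?M s = vocab ?M ! 1"
    by (intro next_tok_eq_strict_argmax) (auto simp: sat_transformer_shape sat_vocab_nth, fastforce)
  then show ?thesis by (simp only: sat_transformer_shape sat_vocab_nth)
qed

lemma logit_satisfied_low:
  assumes "1 / (3 * N) \<le> violation p (6 * N ^ 4 * real p) (6 * N ^ 3) s (length s - 1)"
  shows "logits (sat_transformer p N) s 1 \<le> -3"
  using mult_left_mono[OF assms, of "36 * N"] N_pos by (simp add: logits_sat_transformer_bits)

lemma next_tok_exhausted:
  assumes "1 / (3 * N) \<le> violation p (6 * N ^ 4 * real p) (6 * N ^ 3) s (length s - 1)"
    and "\<forall>v<p. b v"
  shows "next_tok (sat_transformer p N) s = Aux 0"
proof -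
  let ?M = "sat_transformer p N"
  have "logits ?M s j < 1/2" if "j \<noteq> 0" for j
    using logit_satisfied_low[OF assms(1)] assms(2) that by (auto simp: logits_sat_transformer_bits)
  then have "next_tok ?M s = vocab ?M ! 0"
    by (intro next_tok_eq_strict_argmax) (auto simp: sat_transformer_shape sat_vocab_nth
        logits_sat_transformer_bits)
  then show ?thesis by (simp add: sat_transformer_shape sat_vocab_nth)
qed

lemma next_tok_increment:
  assumes "1 / (3 * N) \<le> violation p (6 * N ^ 4 * real p) (6 * N ^ 3) s (length s - 1)"
    and "\<exists>t<p. \<not> b t"
  shows "next_tok (sat_transformer p N) s = incr_tok (lowest_false p b)"
proof -
  let ?M = "sat_transformer p N" and ?t = "lowest_false p b"
  have t: "?t < p" by (rule lowest_false_spec(1)[OF assms(2)])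
  have one_hot: "(\<not> b r \<and> (\<forall>u<r. b u)) \<longleftrightarrow> r = ?t" if "r < p" for r
    using lowest_false_iff[OF assms(2) that] .
  have "logits ?M s j < 1" if "j \<noteq> ?t + 2" for j
    using logit_satisfied_low[OF assms(1)] one_hot[of "j - 2"] that
    by (auto simp: logits_sat_transformer_bits)
  moreover have "logits ?M s (?t + 2) = 1" using one_hot[OF t] t by (simp add: logits_sat_transformer_bits)
  ultimately have "next_tok ?M s = vocab ?M ! (?t + 2)"
    using t by (intro next_tok_eq_strict_argmax) (auto simp: sat_transformer_shape sat_vocab_nth)
  then show ?thesis using sat_vocab_nth(4)[OF t] by (simp only: sat_transformer_shape)
qed

end

lemma sharpness_bounds:
  fixes N :: real
  assumes "0 < N"
  shows "N * exp (- (6 * N ^ 3 / N)) \<le> 1 / (6 * N)"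
    and "6 * N ^ 3 * (real p * (N * exp (- (6 * N ^ 4 * real p)))) \<le> 1"
proof -
  have "6 * N ^ 3 / N = 6 * N ^ 2" using assms by (simp add: power3_eq_cube power2_eq_square)
  then have "N * exp (- (6 * N ^ 3 / N)) = N / exp (6 * N ^ 2)" by (simp add: exp_minus divide_inverse)
  also have "\<dots> \<le> N / (6 * N ^ 2)"
  proof -
    have "6 * N ^ 2 \<le> exp (6 * N ^ 2)" using exp_ge_add_one_self[of "6 * N ^ 2"] by linarith
    then show ?thesis using assms by (intro divide_left_mono) auto
  qed
  also have "\<dots> = 1 / (6 * N)" using assms by (simp add: power2_eq_square)
  finally show "N * exp (- (6 * N ^ 3 / N)) \<le> 1 / (6 * N)" .
  let ?x = "6 * N ^ 4 * real p"
  have "6 * N ^ 3 * (real p * (N * exp (- ?x))) = ?x / exp ?x"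
    by (simp add: exp_minus power4_eq_xxxx power3_eq_cube divide_inverse)
  also have "\<dots> \<le> 1"
  proof -
    have "?x \<le> exp ?x" using exp_ge_add_one_self[of ?x] by linarith
    then show ?thesis by simp
  qed
  finally show "6 * N ^ 3 * (real p * (N * exp (- ?x))) \<le> 1" .
qed

definition sat_model :: "nat \<Rightarrow> nat \<Rightarrow> transformer" where
  "sat_model p c = sat_transformer p (real (4 * c + 2 ^ p + 2))"

lemma next_tok_sat_model:
  assumes F: "valid_formula p c F" and "k < 2 ^ p"
  shows "next_tok (sat_model p c) (dimacs F @ map incr_tok (incr_trace p k)) =
    (if sat_by_bits (counter_bits p k) F then Aux 1 else if k + 1 = 2 ^ p then Aux 0
     else incr_tok (lowest_false p (counter_bits p k)))"
proof -
  define s where "s = dimacs F @ map incr_tok (incr_trace p k)"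
  define N where "N = real (4 * c + 2 ^ p + 2)"
  define r where "r = SEP # map incr_tok (incr_trace p k)"
  let ?b = "counter_bits p k"
  have N: "0 < N" unfolding N_def of_nat_0_less_iff by simp
  have bits: "\<forall>v<p. bit_sum s (length s - 1) v = of_bool (?b v)"
    using bit_sum_last[OF s_def] incr_features_trace[OF \<open>k < 2 ^ p\<close>] by simp
  have "length s \<le> 4 * c + 2 ^ p + 2"
    using length_dimacs[OF F] \<open>k < 2 ^ p\<close> by (simp add: s_def incr_trace_def)
  then have s: "s = dimacs_body F @ r" "Lit 0 \<notin> set r" "real (length s) \<le> N"
    by (auto simp: s_def r_def dimacs_eq_body N_def incr_tok_def simp del: of_nat_add)
  have F0: "\<forall>C\<in>set F. 0 \<notin> set C \<and> (\<forall>l\<in>set C. \<bar>l\<bar> \<le> int p)"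
    using F by (auto simp: valid_formula_def)
  have tok: "next_tok (sat_model p c) s = next_tok (sat_transformer p N) s"
    by (simp add: sat_model_def N_def)
  have "next_tok (sat_transformer p N) s =
    (if sat_by_bits ?b F then Aux 1 else if k + 1 = 2 ^ p then Aux 0 else incr_tok (lowest_false p ?b))"
  proof (cases "sat_by_bits ?b F")
    case True
    then show ?thesis
      using violation_small_if_satisfied[OF bits s F0 _ _ _ sharpness_bounds(1)[OF N]] N
        next_tok_satisfied[OF bits N] by (simp add: sat_by_bits_def)
  next
    case False
    then obtain C where "C \<in> set F" "\<forall>l\<in>set C. \<not> lit_true (bits_assignment ?b) l"
      by (auto simp: sat_by_bits_def)
    then have "1 / (3 * N) \<le> violation p (6 * N ^ 4 * real p) (6 * N ^ 3) s (length s - 1)"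
      using violation_large_if_falsified[OF bits s _ _ _ _ _ sharpness_bounds(2)[OF N]] F0 N by simp
    then show ?thesis
      using False next_tok_exhausted[OF bits N] next_tok_increment[OF bits N]
        counter_bits_all_iff[OF \<open>k < 2 ^ p\<close>] by auto
  qed
  then show ?thesis using tok unfolding s_def by simp
qed

lemma three_sat_dimacs:
  assumes "valid_formula p c F"
  shows "three_sat p c (dimacs F) = (if satisfiable F then 1 else 0)"
proof -
  have "F' = F" if "valid_formula p c F'" "dimacs F = dimacs F'" for F'
    using dimacs_inj[of F' F] that assms by (auto simp: valid_formula_def)
  then show ?thesis using assms by (auto simp: three_sat_def)
qed

lemma satisfiable_iff_counter:
  assumes "valid_formula p c F"
  shows "satisfiable F \<longleftrightarrow> (\<exists>k<2 ^ p. sat_by_bits (counter_bits p k) F)"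
proof
  assume "satisfiable F"
  then obtain \<sigma> where \<sigma>: "\<forall>C\<in>set F. \<exists>l\<in>set C. lit_true \<sigma> l" by (auto simp: satisfiable_def)
  obtain k where k: "k < 2 ^ p" "\<forall>v<p. counter_bits p k v = \<sigma> (v + 1)"
    using counter_bits_surj[of p "\<lambda>v. \<sigma> (v + 1)"] by blast
  have "lit_true (bits_assignment (counter_bits p k)) l = lit_true \<sigma> l" if "C \<in> set F" "l \<in> set C" for C l
    using that assms k(2) by (intro lit_true_bits_assignment) (auto simp: valid_formula_def)
  then have "sat_by_bits (counter_bits p k) F" using \<sigma> by (auto simp: sat_by_bits_def)
  then show "\<exists>k<2 ^ p. sat_by_bits (counter_bits p k) F" using k(1) by blast
qed (auto simp: satisfiable_def sat_by_bits_def)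

definition search_end :: "nat \<Rightarrow> int list list \<Rightarrow> nat" where
  "search_end p F = (LEAST k. sat_by_bits (counter_bits p k) F \<or> k + 1 = 2 ^ p)"

lemma search_end:
  shows search_end_less: "search_end p F < 2 ^ p"
    and search_end_stops: "sat_by_bits (counter_bits p (search_end p F)) F \<or> search_end p F + 1 = 2 ^ p"
    and search_end_least:
      "k < search_end p F \<Longrightarrow> \<not> sat_by_bits (counter_bits p k) F \<and> k + 1 \<noteq> 2 ^ p"
proof -
  let ?stop = "\<lambda>k. sat_by_bits (counter_bits p k) F \<or> k + 1 = 2 ^ p"
  have last: "?stop (2 ^ p - 1)" by simp
  then show "?stop (search_end p F)" unfolding search_end_def by (rule LeastI)
  have "search_end p F \<le> 2 ^ p - 1" unfolding search_end_def using last by (rule Least_le)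
  then show "search_end p F < 2 ^ p" by (metis diff_less le_less_trans less_one pos2 zero_less_power)
  show "\<not> sat_by_bits (counter_bits p k) F \<and> k + 1 \<noteq> 2 ^ p" if "k < search_end p F"
    using not_less_Least[OF that[unfolded search_end_def]] by simp
qed

lemma satisfiable_iff_search_end:
  assumes "valid_formula p c F"
  shows "satisfiable F \<longleftrightarrow> sat_by_bits (counter_bits p (search_end p F)) F"
proof -
  have "k \<le> search_end p F" if "k < 2 ^ p" "\<not> sat_by_bits (counter_bits p (search_end p F)) F" for k
    using that search_end_stops[of p F] by linarith
  then show ?thesis
    using satisfiable_iff_counter[OF assms] search_end_less[of p F] search_end_least[of _ p F]
    by (metis le_neq_implies_less)
qed

theorem sat_model_halts:
  assumes F: "valid_formula p c F"
  shows "\<exists>t\<le>2 ^ p. halts_with (sat_model p c) (Aux 0) (Aux 1) (dimacs F) t (three_sat p c (dimacs F))"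
proof -
  let ?e = "search_end p F"
  define fin where "fin = (if sat_by_bits (counter_bits p ?e) F then Aux 1 else Aux 0)"
  define out where "out = map incr_tok (incr_trace p ?e) @ [fin]"
  have prefix: "take k out = map incr_tok (incr_trace p k)" if "k \<le> ?e" for k
    using that by (simp add: out_def incr_trace_def take_map)
  have "next_tok (sat_model p c) (dimacs F @ take k out) = out ! k" if "k < length out" for k
  proof (cases "k < ?e")
    case True
    then show ?thesis using search_end_least[OF True] search_end_less[of p F]
        next_tok_sat_model[OF F, of k] prefix[of k]
      by (simp add: out_def nth_append incr_trace_def)
  next
    case False
    then have "k = ?e" using that by (simp add: out_def incr_trace_def)
    then show ?thesis using search_end_stops[of p F] search_end_less[of p F]
        next_tok_sat_model[OF F, of ?e] prefix[of ?e]
      by (auto simp: out_def nth_append incr_trace_def fin_def)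
  qed
  moreover have "three_sat p c (dimacs F) = (if fin = Aux 0 then 0 else 1)"
    by (simp add: three_sat_dimacs[OF F] satisfiable_iff_search_end[OF F] fin_def)
  ultimately have "halts_with (sat_model p c) (Aux 0) (Aux 1) (dimacs F) (length out)
      (three_sat p c (dimacs F))"
    using halts_with_generated[of out "sat_model p c" "dimacs F" "Aux 0" "Aux 1"]
    by (auto simp: out_def fin_def incr_tok_def)
  moreover have "length out \<le> 2 ^ p" using search_end_less[of p F] by (simp add: out_def incr_trace_def)
  ultimately show ?thesis by blast
qed

lemma decides_3sat_within_mono:
  "decides_3sat_within M p c N \<Longrightarrow> N \<le> N' \<Longrightarrow> decides_3sat_within M p c N'"
  unfolding decides_3sat_within_def by (meson order_trans)

lemma decides_sat_model: "decides_3sat_within (sat_model p c) p c (2 ^ p)"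
proof -
  have "dimacs_alphabet p \<subseteq> set (sat_vocab p)"
    by (auto simp: dimacs_alphabet_def sat_vocab_def image_iff)
  then show ?thesis
    using sat_model_halts unfolding decides_3sat_within_def DIMACS_def
    by (intro conjI exI[of _ "Aux 0"] exI[of _ "Aux 1"])
      (auto simp: sat_model_def sat_transformer_def sat_vocab_def)
qed

lemma wf_sat_transformer: "wf_transformer (sat_transformer p N)"
  by (auto simp: wf_transformer_def sat_transformer_def sat_vocab_def incr_tok_def distinct_map
      inj_on_def)

lemma num_params_sat_transformer: "num_params (sat_transformer p N) = 736 * p^2 + 1039 * p + 367"
  by (simp add: num_params_def sat_transformer_def sat_vocab_nth layer_params_def zero_layer_def
      mean_layer_def count_layer_def clause_layer_def lowest_false_layer_def check_layer_def
      algebra_simps power2_eq_square)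

theorem mainTheorem1:
  "\<exists>C::real. \<forall>p c::nat. 1 \<le> p \<longrightarrow> 1 \<le> c \<longrightarrow>
     (\<exists>M. wf_transformer M \<and> length (layers M) = 7 \<and> nheads M = 5 \<and>
          real (dim M) \<le> C * real p \<and> real (num_params M) \<le> C * real p ^ 2 \<and>
          decides_3sat_within M p c (p * 2 ^ (p + 1)))"
proof (intro exI[of _ 2142] allI impI)
  fix p c :: nat
  assume "1 \<le> p" "1 \<le> c"
  let ?M = "sat_model p c"
  have "p \<le> p ^ 2" "1 \<le> p ^ 2" using \<open>1 \<le> p\<close> by (auto simp: power2_eq_square)
  then have "num_params ?M \<le> 2142 * p ^ 2"
    unfolding sat_model_def num_params_sat_transformer by linarith
  then have params: "real (num_params ?M) \<le> 2142 * real p ^ 2"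
    by (metis of_nat_le_iff of_nat_mult of_nat_numeral of_nat_power)
  have dim: "real (dim ?M) \<le> 2142 * real p"
    using \<open>1 \<le> p\<close> by (simp add: sat_model_def sat_transformer_shape)
  have "(2::nat) ^ p \<le> p * 2 ^ (p + 1)" using \<open>1 \<le> p\<close> by simp
  then have "decides_3sat_within ?M p c (p * 2 ^ (p + 1))"
    by (rule decides_3sat_within_mono[OF decides_sat_model])
  then show "\<exists>M. wf_transformer M \<and> length (layers M) = 7 \<and> nheads M = 5 \<and>
      real (dim M) \<le> 2142 * real p \<and> real (num_params M) \<le> 2142 * real p ^ 2 \<and>
      decides_3sat_within M p c (p * 2 ^ (p + 1))"
    using params dim wf_sat_transformer
    by (intro exI[of _ ?M]) (simp add: sat_model_def sat_transformer_shape)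
qed

end
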